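(* Consider $\min_{x\in X}f(x)$, $f(x)=\mathbb{E}[F(x,\xi)]$, with $F:\mathcal{D}\times\Omega\to\mathbb{R}$, $\mathcal{D}\subseteq\mathbb{R}^n$ open, $X\subset\mathcal{D}$ nonempty closed convex, $F(\cdot,\xi)$ convex on $\mathcal{D}$ for all $\xi$, $\mathbb{E}[F(x,\xi)]$ finite on $\mathcal{D}$. Let $f$ be differentiable over $X$ with $L$-Lipschitz gradient ($L>0$) and strongly convex with constant $\eta>0$, with unique minimizer $x^*$. Let $\{x_k\}$ be generated by $x_{k+1}=\Pi_X(x_k-\gamma_k^*(\nabla f(x_k)+w_k))$, $w_k=\nabla_xF(x_k,\xi_k)-\nabla f(x_k)$, where $\mathbb{E}[\|w_k\|^2\mid\mathcal{F}_k]\le\nu^2$ a.s. for all $k$, and $\gamma_0^*=\frac{\eta}{2\nu^2}e_0$, $\gamma_k^*=\gamma_{k-1}^*(1-\frac\eta2\gamma_{k-1}^* )$ ($k\ge1$), with $e_0=\mathbb{E}[\|x_0-x^*\|^2]$. If $\frac{\eta}{2\nu^2}\mathbb{E}[\|x_0-x^*\|^2]<\frac1L$, then $\{x_k\}$ converges almost surely to $x^*$.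
   Context: $\Pi_X$ is Euclidean projection; $x_0\in X$ random with $\mathbb{E}\|x_0\|^2<\infty$; $\xi_k$ samples of $\xi$; $\mathcal{F}_k=\{x_0,\xi_0,\dots,\xi_{k-1}\}$; $\mathbb{E}[w_k\mid\mathcal{F}_k]=0$. *)

theory Defs
  imports "HOL-Analysis.Analysis" "HOL-Probability.Probability"
begin

text \<open>Strong convexity with modulus eta on a set X (standard convention:
  f - (eta/2) norm^2 is convex).\<close>
definition strongly_convex_on :: "'v::real_normed_vector set \<Rightarrow> ('v \<Rightarrow> real) \<Rightarrow> real \<Rightarrow> bool" where
  "strongly_convex_on X f eta \<longleftrightarrow>
     (\<forall>x\<in>X. \<forall>y\<in>X. \<forall>t::real. 0 \<le> t \<and> t \<le> 1 \<longrightarrow>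
        f ((1 - t) *\<^sub>R x + t *\<^sub>R y)
          \<le> (1 - t) * f x + t * f y - eta / 2 * t * (1 - t) * (norm (x - y))\<^sup>2)"

fun gamma_star :: "real \<Rightarrow> real \<Rightarrow> real \<Rightarrow> nat \<Rightarrow> real" where
  "gamma_star eta nu e0 0 = eta / (2 * nu\<^sup>2) * e0"
| "gamma_star eta nu e0 (Suc k) =
     gamma_star eta nu e0 k * (1 - eta / 2 * gamma_star eta nu e0 k)"

definition history :: "'a measure \<Rightarrow> ('a \<Rightarrow> 'v::topological_space) \<Rightarrow> 's measure
      \<Rightarrow> (nat \<Rightarrow> 'a \<Rightarrow> 's) \<Rightarrow> nat \<Rightarrow> 'a measure" where
  "history M x0 S xi k = sigma (space M)
     ({x0 -` A \<inter> space M | A. A \<in> sets borel}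
      \<union> {xi i -` B \<inter> space M | i B. i < k \<and> B \<in> sets S})"

end

theory Submission
  imports Defs
begin

text \<open>The squared error V k = |x k - x*|^2 satisfies, by nonexpansiveness of the projection and
  strong monotonicity and Lipschitz continuity of the gradient, the conditional descent inequality
  E[V (k+1) | F k] <= (1 - 2 \<eta> \<gamma> k + L^2 \<gamma> k^2) V k + \<gamma> k^2 \<nu>^2.
  The step sizes decrease to 0 and satisfy (2 \<nu>^2/\<eta>) \<gamma> k = \<gamma> k^2 \<nu>^2 + (2 \<nu>^2/\<eta>) \<gamma> (k+1),
  so V k + (2 \<nu>^2/\<eta>) \<gamma> k is eventually a nonnegative supermartingale. Its expectation tends to 0,
  because the expected error is eventually dominated by a multiple of \<gamma> k, and Ville's maximal
  inequality turns this into almost sure convergence.\<close>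

section \<open>Step sizes and the expected error\<close>

lemma logistic_decay_bounds:
  fixes g :: "nat \<Rightarrow> real"
  assumes step: "\<And>k. g (Suc k) = g k * (1 - c * g k)"
    and c: "0 < c" and g0: "0 \<le> g 0" "c * g 0 \<le> 1"
  shows "0 \<le> g k" and "c * g k \<le> 1" and "g (Suc k) \<le> g k"
proof -
  have "0 \<le> g k \<and> c * g k \<le> 1"
  proof (induction k)
    case 0
    show ?case using g0 by simp
  next
    case (Suc k)
    have "0 \<le> g k * (1 - c * g k)" using Suc by simp
    moreover have "g k * (1 - c * g k) \<le> g k" using Suc c by (simp add: algebra_simps)
    then have "c * (g k * (1 - c * g k)) \<le> 1"
      using mult_left_mono[of _ _ c] Suc c by (meson less_imp_le order_trans)
    ultimately show ?case by (simp add: step)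
  qed
  then show "0 \<le> g k" "c * g k \<le> 1" by auto
  then show "g (Suc k) \<le> g k" using c by (simp add: step algebra_simps)
qed

lemma logistic_decay_pos:
  fixes g :: "nat \<Rightarrow> real"
  assumes step: "\<And>k. g (Suc k) = g k * (1 - c * g k)"
    and c: "0 < c" and g0: "0 < g 0" "c * g 0 < 1"
  shows "0 < g k"
proof (induction k)
  case 0
  show ?case using g0 by simp
next
  case (Suc k)
  have "decseq g"
    using logistic_decay_bounds(3)[where g=g, OF step c] g0 by (intro decseq_SucI) simp
  then have "c * g k \<le> c * g 0" using c by (simp add: decseq_def)
  then show ?case using Suc g0 by (simp add: step)
qed

lemma logistic_decay_tendsto_0:
  fixes g :: "nat \<Rightarrow> real"
  assumes step: "\<And>k. g (Suc k) = g k * (1 - c * g k)"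
    and c: "0 < c" and g0: "0 \<le> g 0" "c * g 0 \<le> 1"
  shows "g \<longlonglongrightarrow> 0"
proof -
  note bounds = logistic_decay_bounds[where g=g and c=c, OF step c g0]
  obtain l where l: "g \<longlonglongrightarrow> l"
    using decseq_convergent[of g 0] bounds by (metis decseq_SucI)
  have "(\<lambda>k. g (Suc k)) \<longlonglongrightarrow> l" using l by (rule LIMSEQ_Suc)
  moreover have "(\<lambda>k. g (Suc k)) \<longlonglongrightarrow> l * (1 - c * l)"
    unfolding step by (intro tendsto_intros l)
  ultimately have "l = l * (1 - c * l)" by (rule LIMSEQ_unique)
  then have "l = 0" using c by (simp add: algebra_simps)
  then show ?thesis using l by simp
qed

text \<open>With C = 2 \<nu>^2 / \<eta>, the next step g' = g (1 - \<eta>/2 g) satisfies C g' = C g - g^2 \<nu>^2, so the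
  noise term is absorbed and the excess of e over C g contracts.\<close>
lemma excess_over_step_contracts:
  fixes g e e' :: real
  assumes eta: "0 < eta" and g: "0 < g" "g * L\<^sup>2 \<le> eta" "g * eta \<le> 1" and e: "0 \<le> e"
    and rec: "e' \<le> (1 - 2 * g * eta + g\<^sup>2 * L\<^sup>2) * e + g\<^sup>2 * nu\<^sup>2"
  shows "max (e' - 2 * nu\<^sup>2 / eta * (g * (1 - eta / 2 * g))) 0
    \<le> (1 - eta / 2 * g) * max (e - 2 * nu\<^sup>2 / eta * g) 0"
proof -
  define C where "C = 2 * nu\<^sup>2 / eta"
  have "g\<^sup>2 * L\<^sup>2 * e \<le> g * eta * e"
    using g e by (intro mult_right_mono) (auto simp: power2_eq_square mult.assoc mult_left_mono)
  then have "e' \<le> (1 - g * eta) * e + g\<^sup>2 * nu\<^sup>2"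
    using rec by (simp add: algebra_simps)
  moreover have "C * (g * (1 - eta / 2 * g)) = C * g - g\<^sup>2 * nu\<^sup>2"
    using eta by (simp add: C_def field_simps power2_eq_square)
  moreover have "(1 - g * eta) * (e - C * g) = (1 - g * eta) * e - C * g + 2 * g\<^sup>2 * nu\<^sup>2"
    using eta by (simp add: C_def field_simps power2_eq_square)
  ultimately have "e' - C * (g * (1 - eta / 2 * g)) \<le> (1 - g * eta) * (e - C * g)"
    by linarith
  also have "\<dots> \<le> (1 - g * eta) * max (e - C * g) 0"
    using g by (intro mult_left_mono) auto
  also have "\<dots> \<le> (1 - eta / 2 * g) * max (e - C * g) 0"
    using g eta by (intro mult_right_mono) auto
  finally have "e' - C * (g * (1 - eta / 2 * g)) \<le> (1 - eta / 2 * g) * max (e - C * g) 0" .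
  moreover have "0 \<le> (1 - eta / 2 * g) * max (e - C * g) 0"
    using g(3) by (intro mult_nonneg_nonneg) (auto simp: mult.commute)
  ultimately show ?thesis by (simp add: C_def[symmetric])
qed

text \<open>The excess d k = max (e k - C g k) 0 eventually contracts by the factor
  1 - \<eta>/2 g k = g (Suc k) / g k, which telescopes to d K g n / g K.\<close>
lemma error_recursion_tendsto_0:
  fixes g e :: "nat \<Rightarrow> real"
  assumes step: "\<And>k. g (Suc k) = g k * (1 - eta / 2 * g k)"
    and eta: "0 < eta" and g0: "0 < g 0" "eta / 2 * g 0 < 1"
    and e_nonneg: "\<And>k. 0 \<le> e k"
    and rec: "\<And>k. e (Suc k) \<le> (1 - 2 * g k * eta + (g k)\<^sup>2 * L\<^sup>2) * e k + (g k)\<^sup>2 * nu\<^sup>2"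
  shows "e \<longlonglongrightarrow> 0"
proof -
  have c: "0 < eta / 2" using eta by simp
  have g_pos: "0 < g k" for k by (rule logistic_decay_pos[where g=g, OF step c g0])
  have g_le: "eta / 2 * g k \<le> 1" for k
    by (rule logistic_decay_bounds(2)[where g=g, OF step c]) (use g0 in auto)
  have g_lim: "g \<longlonglongrightarrow> 0" by (rule logistic_decay_tendsto_0[where g=g, OF step c]) (use g0 in auto)
  define C where "C = 2 * nu\<^sup>2 / eta"
  define d where "d k = max (e k - C * g k) 0" for k
  have "eventually (\<lambda>k. g k * L\<^sup>2 < eta) sequentially" "eventually (\<lambda>k. g k * eta < 1) sequentially"
    using order_tendstoD(2)[OF tendsto_mult_left_zero[OF g_lim]] eta by auto
  then obtain K where K: "\<And>k. K \<le> k \<Longrightarrow> g k * L\<^sup>2 \<le> eta \<and> g k * eta \<le> 1"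
    unfolding eventually_sequentially by (meson le_trans less_imp_le nat_le_linear)
  have d_telescope: "d (K + m) * g K \<le> d K * g (K + m)" for m
  proof (induction m)
    case (Suc m)
    have "g (K + m) * L\<^sup>2 \<le> eta" "g (K + m) * eta \<le> 1" using K[of "K + m"] by auto
    then have "d (K + Suc m) \<le> (1 - eta / 2 * g (K + m)) * d (K + m)"
      using excess_over_step_contracts[OF eta g_pos _ _ e_nonneg rec]
      by (simp add: d_def C_def step)
    then have "d (K + Suc m) * g K \<le> (1 - eta / 2 * g (K + m)) * (d (K + m) * g K)"
      using g_pos[of K] by (simp add: mult_right_mono)
    also have "\<dots> \<le> (1 - eta / 2 * g (K + m)) * (d K * g (K + m))"
      using Suc g_le[of "K + m"] by (intro mult_left_mono) auto
    finally show ?case by (simp add: step algebra_simps)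
  qed simp
  have upper_lim: "(\<lambda>n. C * g n + d K / g K * g n) \<longlonglongrightarrow> 0"
    using tendsto_add[OF tendsto_mult_right_zero[OF g_lim, of C] tendsto_mult_right_zero[OF g_lim, of "d K / g K"]]
    by simp
  have upper: "eventually (\<lambda>n. e n \<le> C * g n + d K / g K * g n) sequentially"
    unfolding eventually_sequentially
  proof (intro exI allI impI)
    fix n assume "K \<le> n"
    then obtain m where "n = K + m" using le_Suc_ex by blast
    then have "d n \<le> d K / g K * g n"
      using d_telescope[of m] g_pos[of K] by (simp add: field_simps)
    then show "e n \<le> C * g n + d K / g K * g n"
      using max.cobounded1[of "e n - C * g n" 0] unfolding d_def by linarith
  qed
  show ?thesis
    using e_nonneg by (intro tendsto_sandwich[OF _ upper tendsto_const upper_lim]) simp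
qed

section \<open>Nonnegative supermartingales\<close>

lemma integrable_imp_set_integrable:
  fixes f :: "'a \<Rightarrow> 'b::{banach, second_countable_topology}"
  shows "A \<in> sets M \<Longrightarrow> integrable M f \<Longrightarrow> set_integrable M A f"
  unfolding set_integrable_def by (rule integrable_mult_indicator)

lemma set_integral_Markov:
  fixes W :: "'a \<Rightarrow> real"
  assumes B: "B \<in> sets M" and int: "integrable M W"
    and nonneg: "\<And>\<omega>. \<omega> \<in> space M \<Longrightarrow> 0 \<le> W \<omega>" and eps: "0 < eps"
  shows "eps * measure M (B \<inter> {\<omega>\<in>space M. eps \<le> W \<omega>}) \<le> (LINT \<omega>:B|M. W \<omega>)"
proof -
  have "measure M {\<omega>\<in>B. eps \<le> W \<omega>} \<le> (LINT \<omega>:B|M. W \<omega>) / eps"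
    using B int eps nonneg sets.sets_into_space[OF B]
    by (intro integral_Markov_inequality'_measure integrable_imp_set_integrable) auto
  moreover have "{\<omega>\<in>B. eps \<le> W \<omega>} = B \<inter> {\<omega>\<in>space M. eps \<le> W \<omega>}"
    using sets.sets_into_space[OF B] by auto
  ultimately show ?thesis using eps by (simp add: field_simps)
qed

text \<open>The supermartingale property (from time K on) is stated through integrals over the events of
  the filtration, which avoids conditional expectations.\<close>
locale nonneg_supermartingale = prob_space M for M :: "'a measure" +
  fixes H :: "nat \<Rightarrow> 'a measure" and W :: "nat \<Rightarrow> 'a \<Rightarrow> real" and K :: nat
  assumes subalgebra: "\<And>k. subalgebra M (H k)"
    and filtration: "\<And>k. sets (H k) \<subseteq> sets (H (Suc k))"
    and adapted: "\<And>k. W k \<in> borel_measurable (H k)"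
    and nonneg: "\<And>k \<omega>. \<omega> \<in> space M \<Longrightarrow> 0 \<le> W k \<omega>"
    and integrable: "\<And>k. integrable M (W k)"
    and super: "\<And>k B. K \<le> k \<Longrightarrow> B \<in> sets (H k) \<Longrightarrow>
      (LINT \<omega>:B|M. W (Suc k) \<omega>) \<le> (LINT \<omega>:B|M. W k \<omega>)"
begin

lemma sets_M: "A \<in> sets (H k) \<Longrightarrow> A \<in> events"
  using subalgebra[of k] unfolding subalgebra_def by auto

lemma space_H: "space (H k) = space M"
  using subalgebra[of k] unfolding subalgebra_def by auto

lemma borel_measurable_W[measurable]: "W k \<in> borel_measurable M"
  by (rule measurable_from_subalg[OF subalgebra adapted])

lemma exceedance_sets: "{\<omega>\<in>space M. \<exists>i\<in>{j..n}. eps \<le> W i \<omega>} \<in> events"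
proof -
  have "{\<omega>\<in>space M. \<exists>i\<in>{j..n}. eps \<le> W i \<omega>} = (\<Union>i\<in>{j..n}. {\<omega>\<in>space M. eps \<le> W i \<omega>})"
    by auto
  also have "\<dots> \<in> events" by (intro sets.finite_UN finite_atLeastAtMost) measurable
  finally show ?thesis .
qed

lemma set_integral_split_level:
  assumes B: "B \<in> sets (H m)"
  shows "(LINT \<omega>:B|M. W m \<omega>)
    = (LINT \<omega>:B \<inter> {\<omega>\<in>space M. eps \<le> W m \<omega>}|M. W m \<omega>) + (LINT \<omega>:B \<inter> {\<omega>\<in>space M. W m \<omega> < eps}|M. W m \<omega>)"
proof -
  have "B = (B \<inter> {\<omega>\<in>space M. eps \<le> W m \<omega>}) \<union> (B \<inter> {\<omega>\<in>space M. W m \<omega> < eps})"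
    using sets.sets_into_space[OF sets_M[OF B]] by auto
  moreover have "B \<inter> {\<omega>\<in>space M. eps \<le> W m \<omega>} \<in> events" "B \<inter> {\<omega>\<in>space M. W m \<omega> < eps} \<in> events"
    using sets_M[OF B] by measurable
  ultimately show ?thesis
    using integrable[of m] by (subst (1) \<open>B = _\<close>, intro set_integral_Un integrable_imp_set_integrable) auto
qed

lemma maximal_inequality:
  assumes eps: "0 < eps" and "K \<le> j" "j \<le> n" and B: "B \<in> sets (H j)"
  shows "eps * measure M (B \<inter> {\<omega>\<in>space M. \<exists>i\<in>{j..n}. eps \<le> W i \<omega>}) \<le> (LINT \<omega>:B|M. W j \<omega>)"
  using \<open>j \<le> n\<close> \<open>K \<le> j\<close> B
proof (induction j arbitrary: B rule: inc_induct)
  case base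
  have "{\<omega>\<in>space M. \<exists>i\<in>{n..n}. eps \<le> W i \<omega>} = {\<omega>\<in>space M. eps \<le> W n \<omega>}" by auto
  then show ?case using set_integral_Markov[OF sets_M[OF base(2)] integrable nonneg eps] by simp
next
  case (step m)
  have [measurable]: "W m \<in> borel_measurable (H m)" by (rule adapted)
  define B1 where "B1 = B \<inter> {\<omega>\<in>space M. eps \<le> W m \<omega>}"
  define B2 where "B2 = B \<inter> {\<omega>\<in>space M. W m \<omega> < eps}"
  define A' where "A' = {\<omega>\<in>space M. \<exists>i\<in>{Suc m..n}. eps \<le> W i \<omega>}"
  have "{\<omega>\<in>space (H m). eps \<le> W m \<omega>} \<in> sets (H m)" "{\<omega>\<in>space (H m). W m \<omega> < eps} \<in> sets (H m)"
    by measurable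
  then have B1: "B1 \<in> sets (H m)" and B2: "B2 \<in> sets (H m)"
    unfolding B1_def B2_def space_H using step.prems(2) by auto
  have "B \<inter> {\<omega>\<in>space M. \<exists>i\<in>{m..n}. eps \<le> W i \<omega>} \<subseteq> B1 \<union> (B2 \<inter> A')"
  proof (intro subsetI)
    fix \<omega> assume "\<omega> \<in> B \<inter> {\<omega>\<in>space M. \<exists>i\<in>{m..n}. eps \<le> W i \<omega>}"
    then obtain i where \<omega>: "\<omega> \<in> B" "\<omega> \<in> space M" and i: "i \<in> {m..n}" "eps \<le> W i \<omega>" by blast
    show "\<omega> \<in> B1 \<union> (B2 \<inter> A')"
    proof (cases "eps \<le> W m \<omega>")
      case False
      then have "i \<in> {Suc m..n}" using i by (cases "i = m") auto
      then show ?thesis using False \<omega> i unfolding B2_def A'_def by auto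
    qed (use \<omega> in \<open>simp add: B1_def\<close>)
  qed
  then have "measure M (B \<inter> {\<omega>\<in>space M. \<exists>i\<in>{m..n}. eps \<le> W i \<omega>}) \<le> measure M B1 + measure M (B2 \<inter> A')"
    using sets_M[OF B1] sets_M[OF B2] exceedance_sets[of "Suc m" n eps]
    by (intro order_trans[OF finite_measure_mono measure_Un_le]) (auto simp: A'_def)
  then have "eps * measure M (B \<inter> {\<omega>\<in>space M. \<exists>i\<in>{m..n}. eps \<le> W i \<omega>})
      \<le> eps * measure M B1 + eps * measure M (B2 \<inter> A')"
    using eps by (simp add: distrib_left[symmetric])
  moreover have "eps * measure M B1 \<le> (LINT \<omega>:B1|M. W m \<omega>)"
    using set_integral_Markov[OF sets_M[OF B1] integrable nonneg eps, of m]
    by (simp add: B1_def Int_assoc)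
  moreover have "eps * measure M (B2 \<inter> A') \<le> (LINT \<omega>:B2|M. W m \<omega>)"
    using step.IH[of B2] B2 filtration super[OF step.prems(1) B2] step.prems(1)
    unfolding A'_def by fastforce
  ultimately show ?case
    using set_integral_split_level[OF step.prems(2), of eps] unfolding B1_def B2_def by linarith
qed

lemma tail_bound:
  assumes eps: "0 < eps" and k: "K \<le> k"
  shows "eps * measure M {\<omega>\<in>space M. \<exists>i\<ge>k. eps \<le> W i \<omega>} \<le> (\<integral>\<omega>. W k \<omega> \<partial>M)"
proof -
  define A where "A n = {\<omega>\<in>space M. \<exists>i\<in>{k..n}. eps \<le> W i \<omega>}" for n
  have space_H: "space M \<in> sets (H k)" using sets.top[of "H k"] by (simp add: space_H)
  have "eps * measure M (A n) \<le> (\<integral>\<omega>. W k \<omega> \<partial>M)" if "k \<le> n" for n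
    using maximal_inequality[OF eps k that space_H]
    unfolding A_def by (simp add: Int_absorb1 set_integral_space[OF integrable])
  moreover have "(\<lambda>n. eps * measure M (A n)) \<longlonglongrightarrow> eps * measure M (\<Union>n. A n)"
  proof (intro tendsto_mult_left finite_Lim_measure_incseq)
    show "range A \<subseteq> sets M" unfolding A_def using exceedance_sets by blast
    show "incseq A" unfolding A_def incseq_def by fastforce
  qed
  ultimately have "eps * measure M (\<Union>n. A n) \<le> (\<integral>\<omega>. W k \<omega> \<partial>M)"
    by (intro LIMSEQ_le_const2) auto
  moreover have "(\<Union>n. A n) = {\<omega>\<in>space M. \<exists>i\<ge>k. eps \<le> W i \<omega>}"
    unfolding A_def by auto (meson atLeastAtMost_iff order_refl)
  ultimately show ?thesis by simp
qed

lemma AE_tendsto_0: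
  assumes lim: "(\<lambda>k. \<integral>\<omega>. W k \<omega> \<partial>M) \<longlonglongrightarrow> 0"
  shows "AE \<omega> in M. (\<lambda>k. W k \<omega>) \<longlonglongrightarrow> 0"
proof -
  have eventually_below: "AE \<omega> in M. eventually (\<lambda>k. W k \<omega> < eps) sequentially" if eps: "0 < eps" for eps
  proof -
    define S where "S = {\<omega>\<in>space M. \<forall>k. \<exists>i\<ge>k. eps \<le> W i \<omega>}"
    have "eps * measure M S \<le> (\<integral>\<omega>. W k \<omega> \<partial>M)" if "K \<le> k" for k
    proof -
      have "measure M S \<le> measure M {\<omega>\<in>space M. \<exists>i\<ge>k. eps \<le> W i \<omega>}"
        unfolding S_def by (intro finite_measure_mono) auto
      then show ?thesis
        using mult_left_mono[of _ _ eps] tail_bound[OF eps that] eps by (meson less_imp_le order_trans)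
    qed
    then have "eps * measure M S \<le> 0" by (intro LIMSEQ_le_const[OF lim]) auto
    moreover have "S \<in> events" unfolding S_def by measurable
    ultimately have "S \<in> null_sets M"
      using eps measure_nonneg[of M S]
      by (simp add: emeasure_eq_measure null_sets_def mult_le_0_iff)
    then show ?thesis
      by (rule AE_I') (auto simp: S_def eventually_sequentially not_less)
  qed
  have "AE \<omega> in M. \<forall>m::nat. eventually (\<lambda>k. W k \<omega> < inverse (Suc m)) sequentially"
    unfolding AE_all_countable by (intro allI eventually_below) simp
  then show ?thesis
  proof (rule AE_mp, intro AE_I2 impI)
    fix \<omega> assume \<omega>: "\<omega> \<in> space M"
      and below: "\<forall>m::nat. eventually (\<lambda>k. W k \<omega> < inverse (Suc m)) sequentially"
    show "(\<lambda>k. W k \<omega>) \<longlonglongrightarrow> 0"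
    proof (rule order_tendstoI)
      fix a :: real assume "0 < a"
      then obtain m where "inverse (Suc m) < a" using reals_Archimedean by blast
      then show "eventually (\<lambda>k. W k \<omega> < a) sequentially"
        using below[rule_format, of m] by (auto elim: eventually_mono)
    next
      fix a :: real assume "a < 0"
      then show "eventually (\<lambda>k. a < W k \<omega>) sequentially"
        using nonneg[OF \<omega>] by (intro always_eventually allI) (rule less_le_trans)
    qed
  qed
qed

end

section \<open>Strong convexity and projected gradient steps\<close>

lemma has_real_derivative_on_line:
  fixes f :: "'v::euclidean_space \<Rightarrow> real"
  assumes fd: "(f has_derivative (\<lambda>h. g \<bullet> h)) (at x)"
  shows "((\<lambda>t. f (x + t *\<^sub>R v)) has_real_derivative (g \<bullet> v)) (at 0)"
proof -
  have l: "((\<lambda>t. x + t *\<^sub>R v) has_derivative (\<lambda>t. t *\<^sub>R v)) (at 0)"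
    by (auto intro!: derivative_eq_intros)
  have fd': "(f has_derivative (\<lambda>h. g \<bullet> h)) (at (x + 0 *\<^sub>R v))" using fd by simp
  have "((\<lambda>t. f (x + t *\<^sub>R v)) has_derivative (\<lambda>t. g \<bullet> (t *\<^sub>R v))) (at 0)"
    using has_derivative_compose[OF l fd'] by simp
  moreover have "(\<lambda>t. g \<bullet> (t *\<^sub>R v)) = (*) (g \<bullet> v)" by (auto simp: fun_eq_iff)
  ultimately show ?thesis unfolding has_field_derivative_def by simp
qed

text \<open>The strong-convexity gap along the segment from x to y is nonpositive and vanishes at x, so its
  derivative there cannot be positive.\<close>
lemma strongly_convex_on_gradient_ineq:
  fixes f :: "'v::euclidean_space \<Rightarrow> real"
  assumes fd: "(f has_derivative (\<lambda>h. g \<bullet> h)) (at x)"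
    and sc: "strongly_convex_on X f eta" and x: "x \<in> X" and y: "y \<in> X"
  shows "g \<bullet> (y - x) \<le> f y - f x - eta/2 * (norm (x - y))\<^sup>2"
proof (rule ccontr)
  assume neg: "\<not> ?thesis"
  define c where "c = (norm (x - y))\<^sup>2"
  define phi where "phi t = f (x + t *\<^sub>R (y - x)) + (- (1-t) * f x - t * f y + eta/2*t*(1-t)*c)" for t
  have p: "((\<lambda>t. - (1-t) * f x - t * f y + eta/2*t*(1-t)*c) has_real_derivative (f x - f y + eta/2*c)) (at 0)"
    by (auto intro!: derivative_eq_intros)
  have "(phi has_real_derivative (g \<bullet> (y - x) + (f x - f y + eta/2*c))) (at 0)"
    unfolding phi_def[abs_def] by (rule DERIV_add[OF has_real_derivative_on_line[OF fd] p])
  moreover have "0 < g \<bullet> (y - x) + (f x - f y + eta/2*c)" using neg unfolding c_def by simp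
  ultimately obtain d where d: "d > 0" "\<And>h. h > 0 \<Longrightarrow> h < d \<Longrightarrow> phi 0 < phi (0 + h)"
    using DERIV_pos_inc_right by blast
  define h where "h = min (d/2) (1/2)"
  have h: "0 < h" "h < d" "h \<le> 1" using d unfolding h_def by auto
  have "phi 0 < phi h" using d(2)[OF h(1,2)] by simp
  moreover have "phi 0 = 0" unfolding phi_def by simp
  moreover have "phi h \<le> 0"
  proof -
    have eq: "x + h *\<^sub>R (y - x) = (1 - h) *\<^sub>R x + h *\<^sub>R y" by (simp add: algebra_simps)
    have "f ((1 - h) *\<^sub>R x + h *\<^sub>R y) \<le> (1 - h) * f x + h * f y - eta / 2 * h * (1 - h) * c"
      using sc x y h unfolding strongly_convex_on_def c_def by auto
    then show ?thesis unfolding phi_def eq by (simp add: algebra_simps)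
  qed
  ultimately show False by simp
qed

lemma minimizer_gradient_ineq:
  fixes f :: "'v::euclidean_space \<Rightarrow> real"
  assumes fd: "(f has_derivative (\<lambda>h. g \<bullet> h)) (at x)"
    and cX: "convex X" and x: "x \<in> X" and y: "y \<in> X" and min: "\<forall>z\<in>X. f x \<le> f z"
  shows "0 \<le> g \<bullet> (y - x)"
proof (rule ccontr)
  assume "\<not> ?thesis"
  then have "g \<bullet> (y - x) < 0" by simp
  then obtain d where d: "d > 0" "\<And>h. h > 0 \<Longrightarrow> h < d \<Longrightarrow> f (x + 0 *\<^sub>R (y - x)) > f (x + (0 + h) *\<^sub>R (y - x))"
    using DERIV_neg_dec_right[OF has_real_derivative_on_line[OF fd, of "y - x"]] by blast
  define h where "h = min (d/2) (1/2)"
  have h: "0 < h" "h < d" "h \<le> 1" using d unfolding h_def by auto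
  have eq: "x + h *\<^sub>R (y - x) = (1 - h) *\<^sub>R x + h *\<^sub>R y" by (simp add: algebra_simps)
  have "x + h *\<^sub>R (y - x) \<in> X" unfolding eq using convexD_alt[OF cX x y] h by simp
  then have "f x \<le> f (x + h *\<^sub>R (y - x))" using min by blast
  moreover have "f x > f (x + h *\<^sub>R (y - x))" using d(2)[OF h(1,2)] by simp
  ultimately show False by simp
qed

lemma strongly_convex_on_gradient_monotone:
  fixes f :: "'v::euclidean_space \<Rightarrow> real"
  assumes fd: "\<forall>z\<in>X. (f has_derivative (\<lambda>h. gf z \<bullet> h)) (at z)"
    and sc: "strongly_convex_on X f eta" and x: "x \<in> X" and y: "y \<in> X"
  shows "eta * (norm (x - y))\<^sup>2 \<le> (x - y) \<bullet> (gf x - gf y)"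
proof -
  have a: "gf x \<bullet> (y - x) \<le> f y - f x - eta/2 * (norm (x - y))\<^sup>2"
    using strongly_convex_on_gradient_ineq[OF _ sc x y] fd x by blast
  have b: "gf y \<bullet> (x - y) \<le> f x - f y - eta/2 * (norm (y - x))\<^sup>2"
    using strongly_convex_on_gradient_ineq[OF _ sc y x] fd y by blast
  have "norm (y - x) = norm (x - y)" by (rule norm_minus_commute)
  moreover have "(x - y) \<bullet> (gf x - gf y) = - (gf x \<bullet> (y - x)) - gf y \<bullet> (x - y)"
    by (simp add: inner_diff inner_commute algebra_simps)
  ultimately show ?thesis using a b by simp
qed

lemma power2_norm_diff_scaleR:
  fixes u v :: "'v::real_inner"
  shows "(norm (u - t *\<^sub>R v))\<^sup>2 = (norm u)\<^sup>2 - 2*t*(u \<bullet> v) + t^2 * (norm v)\<^sup>2"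
proof -
  have "(norm (u - t *\<^sub>R v))\<^sup>2 = (u - t *\<^sub>R v) \<bullet> (u - t *\<^sub>R v)" by (rule power2_norm_eq_inner)
  also have "\<dots> = u \<bullet> u - 2*t*(u \<bullet> v) + t^2 * (v \<bullet> v)"
    by (simp add: inner_diff_left inner_diff_right inner_commute algebra_simps power2_eq_square)
  finally show ?thesis by (simp add: power2_norm_eq_inner)
qed

lemma closest_point_gradient_step_minimizer:
  fixes xs g :: "'v::euclidean_space"
  assumes cX: "convex X" and clX: "closed X" and xs: "xs \<in> X"
    and opt: "\<forall>y\<in>X. 0 \<le> g \<bullet> (y - xs)" and gam: "0 \<le> gam"
  shows "closest_point X (xs - gam *\<^sub>R g) = xs"
proof -
  have "\<forall>y\<in>X. dist (xs - gam *\<^sub>R g) xs \<le> dist (xs - gam *\<^sub>R g) y"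
  proof
    fix y assume y: "y \<in> X"
    have "(dist (xs - gam *\<^sub>R g) y)\<^sup>2 = (norm ((y - xs) - (-gam) *\<^sub>R g))\<^sup>2"
      by (simp add: dist_norm norm_minus_commute algebra_simps)
    also have "\<dots> = (norm (y - xs))\<^sup>2 + 2 * gam * ((y - xs) \<bullet> g) + (-gam)^2 * (norm g)\<^sup>2"
      using power2_norm_diff_scaleR[of "y - xs" "-gam" g] by simp
    also have "\<dots> \<ge> (-gam)^2 * (norm g)\<^sup>2"
      using opt y gam by (simp add: inner_commute)
    also have "(-gam)^2 * (norm g)\<^sup>2 = (norm (gam *\<^sub>R g))\<^sup>2" by (simp add: power_mult_distrib)
    finally have "(norm (gam *\<^sub>R g))\<^sup>2 \<le> (dist (xs - gam *\<^sub>R g) y)\<^sup>2" .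
    moreover have "dist (xs - gam *\<^sub>R g) xs = norm (gam *\<^sub>R g)" by (simp add: dist_norm)
    ultimately show "dist (xs - gam *\<^sub>R g) xs \<le> dist (xs - gam *\<^sub>R g) y"
      by (metis power2_le_imp_le zero_le_dist)
  qed
  then show ?thesis using closest_point_unique[OF cX clX xs] by simp
qed

lemma gradient_step_contraction:
  fixes x xs gx gs :: "'v::euclidean_space"
  assumes sm: "eta * (norm (x - xs))\<^sup>2 \<le> (x - xs) \<bullet> (gx - gs)"
    and lip: "norm (gx - gs) \<le> L * norm (x - xs)" and gam: "0 \<le> gam" and L: "0 \<le> L"
  shows "(norm (x - xs - gam *\<^sub>R (gx - gs)))\<^sup>2 \<le> (1 - 2*gam*eta + gam^2*L^2) * (norm (x - xs))\<^sup>2"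
proof -
  have "(norm (x - xs - gam *\<^sub>R (gx - gs)))\<^sup>2
      = (norm (x - xs))\<^sup>2 - 2*gam*((x - xs) \<bullet> (gx - gs)) + gam^2 * (norm (gx - gs))\<^sup>2"
    using power2_norm_diff_scaleR[of "x - xs" gam "gx - gs"] by simp
  also have "\<dots> \<le> (norm (x - xs))\<^sup>2 - 2*gam*(eta * (norm (x - xs))\<^sup>2) + gam^2 * (L * norm (x - xs))\<^sup>2"
  proof -
    have "2*gam*(eta * (norm (x - xs))\<^sup>2) \<le> 2*gam*((x - xs) \<bullet> (gx - gs))"
      using sm gam by (intro mult_left_mono) auto
    moreover have "(norm (gx - gs))\<^sup>2 \<le> (L * norm (x - xs))\<^sup>2"
      using lip by (intro power_mono) auto
    then have "gam^2 * (norm (gx - gs))\<^sup>2 \<le> gam^2 * (L * norm (x - xs))\<^sup>2"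
      by (intro mult_left_mono) auto
    ultimately show ?thesis by linarith
  qed
  also have "\<dots> = (1 - 2*gam*eta + gam^2*L^2) * (norm (x - xs))\<^sup>2"
    by (simp add: algebra_simps power_mult_distrib)
  finally show ?thesis .
qed

lemma strongly_monotone_le_lipschitz:
  fixes gf :: "'v::real_inner \<Rightarrow> 'v"
  assumes sm: "eta * (norm (x - y))\<^sup>2 \<le> (x - y) \<bullet> (gf x - gf y)"
    and lip: "norm (gf x - gf y) \<le> L * norm (x - y)" and "x \<noteq> y"
  shows "eta \<le> L"
proof -
  have n: "0 < norm (x - y)" using \<open>x \<noteq> y\<close> by simp
  have "eta * (norm (x - y))\<^sup>2 \<le> norm (x - y) * norm (gf x - gf y)"
    using sm norm_cauchy_schwarz order_trans by blast
  also have "\<dots> \<le> L * (norm (x - y))\<^sup>2"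
    using mult_left_mono[OF lip, of "norm (x - y)"] by (simp add: power2_eq_square mult.left_commute)
  finally show ?thesis using n by simp
qed

lemma projected_gradient_step_dist_le:
  fixes x xs gx gs w :: "'v::euclidean_space"
  assumes X: "convex X" "closed X" "X \<noteq> {}"
    and fixed: "closest_point X (xs - gam *\<^sub>R gs) = xs"
  shows "norm (closest_point X (x - gam *\<^sub>R (gx + w)) - xs) \<le> norm (x - xs - gam *\<^sub>R (gx - gs) - gam *\<^sub>R w)"
proof -
  have "norm (closest_point X (x - gam *\<^sub>R (gx + w)) - xs)
      = dist (closest_point X (x - gam *\<^sub>R (gx + w))) (closest_point X (xs - gam *\<^sub>R gs))"
    by (simp add: fixed dist_norm)
  also have "\<dots> \<le> dist (x - gam *\<^sub>R (gx + w)) (xs - gam *\<^sub>R gs)"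
    by (rule closest_point_lipschitz[OF X])
  also have "\<dots> = norm (x - xs - gam *\<^sub>R (gx - gs) - gam *\<^sub>R w)" by (simp add: dist_norm algebra_simps)
  finally show ?thesis .
qed

lemma power2_norm_diff_le:
  fixes a b :: "'v::real_normed_vector"
  shows "(norm (a - b))\<^sup>2 \<le> 2 * (norm a)\<^sup>2 + 2 * (norm b)\<^sup>2"
proof -
  have "(norm (a - b))\<^sup>2 \<le> (norm a + norm b)\<^sup>2"
    using norm_triangle_ineq4[of a b] by (intro power_mono) auto
  also have "\<dots> \<le> 2 * (norm a)\<^sup>2 + 2 * (norm b)\<^sup>2"
    using sum_squares_bound[of "norm a" "norm b"] by (simp add: power2_sum)
  finally show ?thesis .
qed

section \<open>Measurability of the stochastic gradient\<close>

definition floor_grid :: "nat \<Rightarrow> 'v::euclidean_space \<Rightarrow> 'v" where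
  "floor_grid m v = (\<Sum>b\<in>Basis. (real_of_int \<lfloor>real (Suc m) * (v \<bullet> b)\<rfloor> / real (Suc m)) *\<^sub>R b)"

lemma borel_measurable_floor_grid[measurable]: "floor_grid m \<in> borel_measurable borel"
  unfolding floor_grid_def by measurable

lemma countable_range_floor_grid: "countable (range (floor_grid m :: 'v::euclidean_space \<Rightarrow> 'v))"
proof -
  have "range (floor_grid m :: 'v \<Rightarrow> 'v) \<subseteq> (\<lambda>k. \<Sum>b\<in>Basis. (real_of_int (k b) / real (Suc m)) *\<^sub>R b) ` (Basis \<rightarrow>\<^sub>E (UNIV :: int set))"
  proof
    fix z assume "z \<in> range (floor_grid m :: 'v \<Rightarrow> 'v)"
    then obtain v where v: "z = floor_grid m v" by auto
    let ?k = "restrict (\<lambda>b. \<lfloor>real (Suc m) * (v \<bullet> b)\<rfloor>) Basis"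
    have "z = (\<lambda>k. \<Sum>b\<in>Basis. (real_of_int (k b) / real (Suc m)) *\<^sub>R b) ?k"
      unfolding v floor_grid_def by (intro sum.cong) auto
    moreover have "?k \<in> Basis \<rightarrow>\<^sub>E (UNIV :: int set)" by auto
    ultimately show "z \<in> (\<lambda>k. \<Sum>b\<in>Basis. (real_of_int (k b) / real (Suc m)) *\<^sub>R b) ` (Basis \<rightarrow>\<^sub>E (UNIV :: int set))"
      by blast
  qed
  moreover have "countable (Basis \<rightarrow>\<^sub>E (UNIV :: int set))"
    by (intro countable_PiE) auto
  then have "countable ((\<lambda>k. \<Sum>b\<in>Basis. (real_of_int (k b) / real (Suc m)) *\<^sub>R b) ` (Basis \<rightarrow>\<^sub>E (UNIV :: int set)))"
    by (rule countable_image)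
  ultimately show ?thesis by (rule countable_subset)
qed

lemma floor_grid_inner: "b \<in> Basis \<Longrightarrow> floor_grid m v \<bullet> b = real_of_int \<lfloor>real (Suc m) * (v \<bullet> b)\<rfloor> / real (Suc m)"
  unfolding floor_grid_def by (simp add: inner_sum_left inner_Basis if_distrib sum.delta cong: if_cong)

lemma norm_floor_grid_diff_le: "norm (floor_grid m v - v) \<le> real DIM('v) / real (Suc m)" for v :: "'v::euclidean_space"
proof -
  have c: "\<bar>(floor_grid m v - v) \<bullet> b\<bar> \<le> 1 / real (Suc m)" if b: "b \<in> Basis" for b
  proof -
    define a where "a = real (Suc m)"
    have a: "0 < a" unfolding a_def by simp
    have "(floor_grid m v - v) \<bullet> b = (real_of_int \<lfloor>a * (v \<bullet> b)\<rfloor> - a * (v \<bullet> b)) / a"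
      using b a by (simp add: inner_diff_left floor_grid_inner a_def field_simps)
    moreover have "\<bar>real_of_int \<lfloor>a * (v \<bullet> b)\<rfloor> - a * (v \<bullet> b)\<bar> \<le> 1"
      using of_int_floor_le[of "a * (v \<bullet> b)"] real_of_int_floor_add_one_gt[of "a * (v \<bullet> b)"]
      unfolding abs_le_iff by linarith
    ultimately show ?thesis using a by (simp add: abs_div_pos divide_right_mono a_def)
  qed
  have "norm (floor_grid m v - v) \<le> (\<Sum>b\<in>Basis. \<bar>(floor_grid m v - v) \<bullet> b\<bar>)" by (rule norm_le_l1)
  also have "\<dots> \<le> (\<Sum>b\<in>(Basis::'v set). 1 / real (Suc m))" by (intro sum_mono c)
  also have "\<dots> = real DIM('v) / real (Suc m)" by simp
  finally show ?thesis .
qed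

lemma floor_grid_tendsto: "(\<lambda>m. floor_grid m v) \<longlonglongrightarrow> v" for v :: "'v::euclidean_space"
proof -
  have "(\<lambda>m. real DIM('v) / real (Suc m)) \<longlonglongrightarrow> 0"
    using LIMSEQ_Suc[OF lim_const_over_n[of "real DIM('v)"]] by simp
  then have "(\<lambda>m. norm (floor_grid m v - v)) \<longlonglongrightarrow> 0"
    by (rule Lim_null_comparison[rotated]) (intro always_eventually allI, use norm_floor_grid_diff_le in simp)
  then show ?thesis by (simp add: LIM_zero_cancel tendsto_norm_zero_iff)
qed

lemma borel_measurable_floor_grid_compose:
  fixes F :: "'v::euclidean_space \<Rightarrow> 's \<Rightarrow> real" and N :: "'a measure" and P :: "'s measure"
  assumes D[measurable]: "D \<in> sets borel"
    and meas: "\<forall>y\<in>D. F y \<in> borel_measurable P"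
    and y[measurable]: "y \<in> borel_measurable N" and s[measurable]: "s \<in> measurable N P"
  shows "(\<lambda>\<omega>. if y \<omega> \<in> D \<and> floor_grid m (y \<omega>) \<in> D then F (floor_grid m (y \<omega>)) (s \<omega>) else 0)
    \<in> borel_measurable N"
proof (rule measurable_compose_countable'[where I="range (floor_grid m)"
      and f="\<lambda>v \<omega>. if y \<omega> \<in> D \<and> v \<in> D then F v (s \<omega>) else 0" and g="\<lambda>\<omega>. floor_grid m (y \<omega>)"])
  fix v :: 'v
  show "(\<lambda>\<omega>. if y \<omega> \<in> D \<and> v \<in> D then F v (s \<omega>) else 0) \<in> borel_measurable N"
  proof (cases "v \<in> D")
    case True
    have [measurable]: "F v \<in> borel_measurable P" using meas True by blast
    show ?thesis by measurable
  qed simp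
next
  show "(\<lambda>\<omega>. floor_grid m (y \<omega>)) \<in> measurable N (count_space (range (floor_grid m)))"
    unfolding measurable_count_space_eq_countable[OF countable_range_floor_grid]
  proof (intro conjI ballI)
    fix a :: 'v
    have "{\<omega>\<in>space N. floor_grid m (y \<omega>) = a} \<in> sets N" by measurable
    then show "(\<lambda>\<omega>. floor_grid m (y \<omega>)) -` {a} \<inter> space N \<in> sets N"
      by (simp add: vimage_def Int_def conj_commute)
  qed auto
qed (rule countable_range_floor_grid)

text \<open>F is continuous in its first argument, so F (y \<omega>) (s \<omega>) is the pointwise limit of the
  same expression with y replaced by its countably-valued roundings.\<close>
lemma borel_measurable_caratheodory:
  fixes F :: "'v::euclidean_space \<Rightarrow> 's \<Rightarrow> real" and N :: "'a measure" and P :: "'s measure"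
  assumes D: "open D"
    and cont: "\<forall>s\<in>space P. continuous_on D (\<lambda>y. F y s)"
    and meas: "\<forall>y\<in>D. F y \<in> borel_measurable P"
    and y: "y \<in> borel_measurable N" and s: "s \<in> measurable N P"
  shows "(\<lambda>\<omega>. if y \<omega> \<in> D then F (y \<omega>) (s \<omega>) else 0) \<in> borel_measurable N"
proof (rule borel_measurable_LIMSEQ_real)
  define u where "u m \<omega> = (if y \<omega> \<in> D \<and> floor_grid m (y \<omega>) \<in> D then F (floor_grid m (y \<omega>)) (s \<omega>) else 0)"
    for m \<omega>
  show "u m \<in> borel_measurable N" for m
    unfolding u_def[abs_def] using D by (intro borel_measurable_floor_grid_compose[OF _ meas y s]) auto
  fix \<omega> assume \<omega>: "\<omega> \<in> space N"
  show "(\<lambda>m. u m \<omega>) \<longlonglongrightarrow> (if y \<omega> \<in> D then F (y \<omega>) (s \<omega>) else 0)"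
  proof (cases "y \<omega> \<in> D")
    case True
    have sP: "s \<omega> \<in> space P" using measurable_space[OF s \<omega>] .
    have ev: "eventually (\<lambda>m. floor_grid m (y \<omega>) \<in> D) sequentially"
      using topological_tendstoD[OF floor_grid_tendsto D True] .
    have "(\<lambda>m. F (floor_grid m (y \<omega>)) (s \<omega>)) \<longlonglongrightarrow> F (y \<omega>) (s \<omega>)"
      using continuous_on_tendsto_compose[OF cont[rule_format, OF sP] floor_grid_tendsto True ev] .
    moreover have "eventually (\<lambda>m. F (floor_grid m (y \<omega>)) (s \<omega>) = u m \<omega>) sequentially"
      using ev True unfolding u_def by (auto elim: eventually_mono)
    ultimately show ?thesis using True by (simp add: tendsto_cong)
  qed (simp add: u_def)
qed

lemma difference_quotient_tendsto:
  fixes f :: "'v::euclidean_space \<Rightarrow> real"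
  assumes "(f has_derivative (\<lambda>h. g \<bullet> h)) (at y)"
  shows "(\<lambda>n. real (Suc n) * (f (y + inverse (real (Suc n)) *\<^sub>R b) - f y)) \<longlonglongrightarrow> g \<bullet> b"
proof -
  have "((\<lambda>t. (f (y + t *\<^sub>R b) - f (y + 0 *\<^sub>R b)) / (t - 0)) \<longlongrightarrow> g \<bullet> b) (at 0)"
    using has_real_derivative_on_line[OF assms] unfolding has_field_derivative_iff .
  moreover have "filterlim (\<lambda>n. inverse (real (Suc n))) (at 0) sequentially"
    unfolding filterlim_at using LIMSEQ_inverse_real_of_nat by auto
  ultimately have "(\<lambda>n. (f (y + inverse (real (Suc n)) *\<^sub>R b) - f (y + 0 *\<^sub>R b)) / (inverse (real (Suc n)) - 0))
      \<longlonglongrightarrow> g \<bullet> b"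
    by (rule filterlim_compose)
  then show ?thesis by (simp add: divide_inverse mult.commute)
qed

lemma borel_measurable_gradient_compose:
  fixes F :: "'v::euclidean_space \<Rightarrow> 's \<Rightarrow> real" and gF :: "'v \<Rightarrow> 's \<Rightarrow> 'v"
    and N :: "'a measure" and P :: "'s measure"
  assumes D: "open D"
    and cont: "\<forall>s\<in>space P. continuous_on D (\<lambda>y. F y s)"
    and meas: "\<forall>y\<in>D. F y \<in> borel_measurable P"
    and grad: "\<forall>s\<in>space P. \<forall>y\<in>D. ((\<lambda>z. F z s) has_derivative (\<lambda>h. gF y s \<bullet> h)) (at y)"
    and y[measurable]: "y \<in> borel_measurable N" and s[measurable]: "s \<in> measurable N P"
    and yD: "\<forall>\<omega>\<in>space N. y \<omega> \<in> D"
  shows "(\<lambda>\<omega>. gF (y \<omega>) (s \<omega>)) \<in> borel_measurable N"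
proof (rule borel_measurable_euclidean_space[THEN iffD2], intro ballI)
  fix b :: 'v assume b: "b \<in> Basis"
  define Fh where "Fh v \<omega> = (if v \<in> D then F v (s \<omega>) else 0)" for v \<omega>
  define q where "q n \<omega> = real (Suc n) * (Fh (y \<omega> + inverse (real (Suc n)) *\<^sub>R b) \<omega> - Fh (y \<omega>) \<omega>)" for n \<omega>
  show "(\<lambda>\<omega>. gF (y \<omega>) (s \<omega>) \<bullet> b) \<in> borel_measurable N"
  proof (rule borel_measurable_LIMSEQ_real)
    show "q n \<in> borel_measurable N" for n
      unfolding q_def[abs_def] Fh_def
      by (intro borel_measurable_times borel_measurable_diff borel_measurable_const
          borel_measurable_caratheodory[OF D cont meas _ s]) measurable
  next
    fix \<omega> assume \<omega>: "\<omega> \<in> space N"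
    have yD': "y \<omega> \<in> D" using yD \<omega> by blast
    have "(\<lambda>n. y \<omega> + inverse (real (Suc n)) *\<^sub>R b) \<longlonglongrightarrow> y \<omega> + 0 *\<^sub>R b"
      by (intro tendsto_intros LIMSEQ_inverse_real_of_nat)
    then have "eventually (\<lambda>n. y \<omega> + inverse (real (Suc n)) *\<^sub>R b \<in> D) sequentially"
      using topological_tendstoD[OF _ D] yD' by simp
    then have "eventually (\<lambda>n. real (Suc n) * (F (y \<omega> + inverse (real (Suc n)) *\<^sub>R b) (s \<omega>) - F (y \<omega>) (s \<omega>))
        = q n \<omega>) sequentially"
      by eventually_elim (use yD' in \<open>simp add: q_def Fh_def\<close>)
    moreover have "(\<lambda>n. real (Suc n) * (F (y \<omega> + inverse (real (Suc n)) *\<^sub>R b) (s \<omega>) - F (y \<omega>) (s \<omega>)))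
        \<longlonglongrightarrow> gF (y \<omega>) (s \<omega>) \<bullet> b"
      using grad measurable_space[OF s \<omega>] yD' by (intro difference_quotient_tendsto) blast
    ultimately show "(\<lambda>n. q n \<omega>) \<longlonglongrightarrow> gF (y \<omega>) (s \<omega>) \<bullet> b"
      by (rule Lim_transform_eventually[rotated])
  qed
qed

section \<open>The history filtration and conditional moments\<close>

lemma history_gen_pow:
  "{x0 -` A \<inter> space M | A. A \<in> sets borel} \<union> {xi i -` B \<inter> space M | i B. i < k \<and> B \<in> sets S} \<subseteq> Pow (space M)"
  by auto

lemma history_space: "space (history M x0 S xi k) = space M"
  unfolding history_def by (rule space_measure_of[OF history_gen_pow])

lemma history_sets: "sets (history M x0 S xi k) =
   sigma_sets (space M) ({x0 -` A \<inter> space M | A. A \<in> sets borel} \<union> {xi i -` B \<inter> space M | i B. i < k \<and> B \<in> sets S})"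
  unfolding history_def by (rule sets_measure_of[OF history_gen_pow])

lemma subalgebra_history:
  assumes "x0 \<in> borel_measurable M" "\<forall>i. xi i \<in> measurable M S"
  shows "subalgebra M (history M x0 S xi k)"
  unfolding subalgebra_def history_space history_sets
proof (intro conjI refl sets.sigma_sets_subset)
  show "{x0 -` A \<inter> space M | A. A \<in> sets borel} \<union> {xi i -` B \<inter> space M | i B. i < k \<and> B \<in> sets S} \<subseteq> sets M"
    using assms by (auto intro: measurable_sets)
qed

lemma history_mono: "sets (history M x0 S xi k) \<subseteq> sets (history M x0 S xi (Suc k))"
  unfolding history_sets by (intro sigma_sets_mono') (blast dest: less_SucI)

lemma measurable_history_initial: "x0 \<in> borel_measurable (history M x0 S xi k)"
proof (rule measurableI)
  fix A :: "'b set" assume "A \<in> sets borel"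
  then show "x0 -` A \<inter> space (history M x0 S xi k) \<in> sets (history M x0 S xi k)"
    unfolding history_sets history_space by (intro sigma_sets.Basic) blast
qed auto

lemma measurable_history_sample:
  assumes "xi i \<in> measurable M S" "i < k"
  shows "xi i \<in> measurable (history M x0 S xi k) S"
proof (rule measurableI)
  fix x assume "x \<in> space (history M x0 S xi k)"
  then show "xi i x \<in> space S" using assms measurable_space by (metis history_space)
next
  fix B assume "B \<in> sets S"
  then show "xi i -` B \<inter> space (history M x0 S xi k) \<in> sets (history M x0 S xi k)"
    unfolding history_sets history_space using assms by (intro sigma_sets.Basic) blast
qed

lemma prob_space_subalgebra_sigma_finite:
  assumes "prob_space M" "subalgebra M F"
  shows "sigma_finite_subalgebra M F"
proof -
  have "finite_measure_subalgebra M F"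
    unfolding finite_measure_subalgebra_def finite_measure_subalgebra_axioms_def
    using assms prob_space.finite_measure by blast
  then show ?thesis by (rule finite_measure_subalgebra_is_sigma_finite)
qed

lemma integral_mult_cond_exp_0:
  fixes g v :: "'a \<Rightarrow> real"
  assumes M: "prob_space M" and sub: "subalgebra M Fk"
    and g: "g \<in> borel_measurable Fk" and v: "v \<in> borel_measurable M"
    and int: "integrable M (\<lambda>\<omega>. g \<omega> * v \<omega>)"
    and mean: "AE \<omega> in M. real_cond_exp M Fk v \<omega> = 0"
  shows "(\<integral>\<omega>. g \<omega> * v \<omega> \<partial>M) = 0"
proof -
  interpret sigma_finite_subalgebra M Fk by (rule prob_space_subalgebra_sigma_finite[OF M sub])
  have [measurable]: "g \<in> borel_measurable M" by (rule measurable_from_subalg[OF sub g])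
  have "(\<integral>\<omega>. g \<omega> * v \<omega> \<partial>M) = (\<integral>\<omega>. g \<omega> * real_cond_exp M Fk v \<omega> \<partial>M)"
    by (rule real_cond_exp_intg(2)[OF int g v, symmetric])
  also have "\<dots> = (\<integral>\<omega>. 0 \<partial>M)"
    by (rule integral_cong_AE) (use mean in auto)
  finally show ?thesis by simp
qed

lemma set_integral_inner_eq_0:
  fixes u w :: "'a \<Rightarrow> 'v::euclidean_space"
  assumes M: "prob_space M" and sub: "subalgebra M Fk"
    and u: "u \<in> borel_measurable Fk" and w[measurable]: "w \<in> borel_measurable M"
    and u_sq: "integrable M (\<lambda>\<omega>. (norm (u \<omega>))\<^sup>2)" and w_sq: "integrable M (\<lambda>\<omega>. (norm (w \<omega>))\<^sup>2)"
    and mean: "\<forall>b\<in>Basis. AE \<omega> in M. real_cond_exp M Fk (\<lambda>\<omega>. w \<omega> \<bullet> b) \<omega> = 0"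
    and B: "B \<in> sets Fk"
  shows "set_integrable M B (\<lambda>\<omega>. u \<omega> \<bullet> w \<omega>)" and "(LINT \<omega>:B|M. u \<omega> \<bullet> w \<omega>) = 0"
proof -
  have u_M: "u \<in> borel_measurable M" by (rule measurable_from_subalg[OF sub u])
  have B_M: "B \<in> sets M" using B sub unfolding subalgebra_def by auto
  have int: "integrable M (\<lambda>\<omega>. (indicator B \<omega> * (u \<omega> \<bullet> b)) * (w \<omega> \<bullet> b))" if b: "b \<in> Basis" for b
  proof (rule Bochner_Integration.integrable_bound)
    show "integrable M (\<lambda>\<omega>. (norm (u \<omega>))\<^sup>2 + (norm (w \<omega>))\<^sup>2)" using u_sq w_sq by simp
    show "AE \<omega> in M. norm (indicator B \<omega> * (u \<omega> \<bullet> b) * (w \<omega> \<bullet> b)) \<le> norm ((norm (u \<omega>))\<^sup>2 + (norm (w \<omega>))\<^sup>2)"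
    proof (rule AE_I2)
      fix \<omega>
      have "\<bar>indicator B \<omega> * (u \<omega> \<bullet> b) * (w \<omega> \<bullet> b)\<bar> \<le> norm (u \<omega>) * norm (w \<omega>)"
        unfolding abs_mult using Basis_le_norm[OF b]
        by (intro mult_mono) (auto split: split_indicator)
      also have "\<dots> \<le> (norm (u \<omega>))\<^sup>2 + (norm (w \<omega>))\<^sup>2"
        using sum_squares_bound[of "norm (u \<omega>)" "norm (w \<omega>)"]
          mult_nonneg_nonneg[OF norm_ge_zero norm_ge_zero, of "u \<omega>" "w \<omega>"]
        by linarith
      finally show "norm (indicator B \<omega> * (u \<omega> \<bullet> b) * (w \<omega> \<bullet> b)) \<le> norm ((norm (u \<omega>))\<^sup>2 + (norm (w \<omega>))\<^sup>2)"
        by simp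
    qed
    show "(\<lambda>\<omega>. indicator B \<omega> * (u \<omega> \<bullet> b) * (w \<omega> \<bullet> b)) \<in> borel_measurable M"
      by (intro borel_measurable_times borel_measurable_inner borel_measurable_const borel_measurable_indicator)
         (simp_all add: B_M u_M)
  qed
  have inner_eq: "(\<lambda>\<omega>. indicator B \<omega> *\<^sub>R (u \<omega> \<bullet> w \<omega>)) = (\<lambda>\<omega>. \<Sum>b\<in>Basis. (indicator B \<omega> * (u \<omega> \<bullet> b)) * (w \<omega> \<bullet> b))"
  proof (rule ext)
    fix \<omega>
    have "u \<omega> \<bullet> w \<omega> = (\<Sum>b\<in>Basis. (u \<omega> \<bullet> b) * (w \<omega> \<bullet> b))" by (rule euclidean_inner)
    then show "indicator B \<omega> *\<^sub>R (u \<omega> \<bullet> w \<omega>) = (\<Sum>b\<in>Basis. (indicator B \<omega> * (u \<omega> \<bullet> b)) * (w \<omega> \<bullet> b))"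
      by (simp add: sum_distrib_left mult.assoc)
  qed
  show "set_integrable M B (\<lambda>\<omega>. u \<omega> \<bullet> w \<omega>)"
    unfolding set_integrable_def inner_eq using int by auto
  have "(\<integral>\<omega>. (indicator B \<omega> * (u \<omega> \<bullet> b)) * (w \<omega> \<bullet> b) \<partial>M) = 0" if "b \<in> Basis" for b
  proof (rule integral_mult_cond_exp_0[OF M sub _ _ int[OF that]])
    have [measurable]: "u \<in> borel_measurable Fk" "B \<in> sets Fk" by (fact u, fact B)
    show "(\<lambda>\<omega>. indicator B \<omega> * (u \<omega> \<bullet> b)) \<in> borel_measurable Fk" by measurable
  qed (use mean that in auto)
  then show "(LINT \<omega>:B|M. u \<omega> \<bullet> w \<omega>) = 0"
    unfolding set_lebesgue_integral_def inner_eq using int by (simp add: Bochner_Integration.integral_sum)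
qed

lemma nn_set_integral_le_of_nn_cond_exp_le:
  fixes g :: "'a \<Rightarrow> ennreal"
  assumes M: "prob_space M" and sub: "subalgebra M Fk"
    and g[measurable]: "g \<in> borel_measurable M"
    and bound: "AE \<omega> in M. nn_cond_exp M Fk g \<omega> \<le> c"
    and B[measurable]: "B \<in> sets Fk"
  shows "(\<integral>\<^sup>+\<omega>. indicator B \<omega> * g \<omega> \<partial>M) \<le> c * emeasure M B"
proof -
  interpret sigma_finite_subalgebra M Fk by (rule prob_space_subalgebra_sigma_finite[OF M sub])
  have "(\<integral>\<^sup>+\<omega>. indicator B \<omega> * g \<omega> \<partial>M) = (\<integral>\<^sup>+\<omega>. indicator B \<omega> * nn_cond_exp M Fk g \<omega> \<partial>M)"
    by (rule nn_cond_exp_intg[symmetric]) auto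
  also have "\<dots> \<le> (\<integral>\<^sup>+\<omega>. c * indicator B \<omega> \<partial>M)"
    by (rule nn_integral_mono_AE)
       (use bound in \<open>auto elim!: eventually_mono simp: mult.commute split: split_indicator\<close>)
  also have "\<dots> = c * emeasure M B"
    using B sub unfolding subalgebra_def by (intro nn_integral_cmult_indicator) auto
  finally show ?thesis .
qed

lemma bounded_cond_second_moment:
  fixes w :: "'a \<Rightarrow> 'v::euclidean_space"
  assumes M: "prob_space M" and sub: "subalgebra M Fk"
    and w[measurable]: "w \<in> borel_measurable M"
    and var: "AE \<omega> in M. nn_cond_exp M Fk (\<lambda>\<omega>. ennreal ((norm (w \<omega>))\<^sup>2)) \<omega> \<le> ennreal (nu\<^sup>2)"
  shows "integrable M (\<lambda>\<omega>. (norm (w \<omega>))\<^sup>2)"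
    and "B \<in> sets Fk \<Longrightarrow> (LINT \<omega>:B|M. (norm (w \<omega>))\<^sup>2) \<le> nu\<^sup>2 * measure M B"
proof -
  interpret prob_space M by (rule M)
  note bound = nn_set_integral_le_of_nn_cond_exp_le[OF M sub _ var]
  have fin: "(\<integral>\<^sup>+\<omega>. ennreal ((norm (w \<omega>))\<^sup>2) \<partial>M) \<le> ennreal (nu\<^sup>2)"
  proof -
    have "space M \<in> sets Fk" using sets.top[of Fk] sub by (metis subalgebra_def)
    have "(\<integral>\<^sup>+\<omega>. ennreal ((norm (w \<omega>))\<^sup>2) \<partial>M) = (\<integral>\<^sup>+\<omega>. indicator (space M) \<omega> * ennreal ((norm (w \<omega>))\<^sup>2) \<partial>M)"
      by (rule nn_integral_cong) auto
    also have "\<dots> \<le> ennreal (nu\<^sup>2) * emeasure M (space M)"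
      by (rule bound[OF _ \<open>space M \<in> sets Fk\<close>]) measurable
    finally show ?thesis by (simp add: emeasure_space_1)
  qed
  show int: "integrable M (\<lambda>\<omega>. (norm (w \<omega>))\<^sup>2)"
  proof (rule integrableI_bounded)
    show "(\<integral>\<^sup>+\<omega>. ennreal (norm ((norm (w \<omega>))\<^sup>2)) \<partial>M) < \<infinity>"
      using fin by (simp add: le_less_trans)
  qed measurable
  assume B: "B \<in> sets Fk"
  then have B_M: "B \<in> sets M" using sub unfolding subalgebra_def by auto
  have "ennreal (LINT \<omega>:B|M. (norm (w \<omega>))\<^sup>2) = (\<integral>\<^sup>+\<omega>. ennreal (indicator B \<omega> * (norm (w \<omega>))\<^sup>2) \<partial>M)"
    unfolding set_lebesgue_integral_def real_scaleR_def
    by (rule nn_integral_eq_integral[symmetric]) (use integrable_mult_indicator[OF B_M int] in auto)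
  also have "\<dots> = (\<integral>\<^sup>+\<omega>. indicator B \<omega> * ennreal ((norm (w \<omega>))\<^sup>2) \<partial>M)"
    by (rule nn_integral_cong) (auto split: split_indicator)
  also have "\<dots> \<le> ennreal (nu\<^sup>2) * emeasure M B" by (rule bound[OF _ B]) measurable
  also have "\<dots> = ennreal (nu\<^sup>2) * ennreal (measure M B)"
    by (simp only: emeasure_eq_measure)
  also have "\<dots> = ennreal (nu\<^sup>2 * measure M B)"
    by (intro ennreal_mult[symmetric] zero_le_power2 measure_nonneg)
  finally show "(LINT \<omega>:B|M. (norm (w \<omega>))\<^sup>2) \<le> nu\<^sup>2 * measure M B"
    by (rule ennreal_le_iff[THEN iffD1, rotated]) (intro mult_nonneg_nonneg zero_le_power2 measure_nonneg)
qed

lemma conditional_descent: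
  fixes u w :: "'a \<Rightarrow> 'v::euclidean_space" and V V' :: "'a \<Rightarrow> real"
  assumes M: "prob_space M" and sub: "subalgebra M Fk"
    and u: "u \<in> borel_measurable Fk" and w: "w \<in> borel_measurable M"
    and u_sq: "integrable M (\<lambda>\<omega>. (norm (u \<omega>))\<^sup>2)"
    and mean: "\<forall>b\<in>Basis. AE \<omega> in M. real_cond_exp M Fk (\<lambda>\<omega>. w \<omega> \<bullet> b) \<omega> = 0"
    and var: "AE \<omega> in M. nn_cond_exp M Fk (\<lambda>\<omega>. ennreal ((norm (w \<omega>))\<^sup>2)) \<omega> \<le> ennreal (nu\<^sup>2)"
    and V: "integrable M V" and V': "integrable M V'"
    and step: "\<And>\<omega>. \<omega> \<in> space M \<Longrightarrow>
      V' \<omega> \<le> c * V \<omega> - 2 * gam * (u \<omega> \<bullet> w \<omega>) + gam\<^sup>2 * (norm (w \<omega>))\<^sup>2"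
    and B: "B \<in> sets Fk"
  shows "(LINT \<omega>:B|M. V' \<omega>) \<le> c * (LINT \<omega>:B|M. V \<omega>) + gam\<^sup>2 * nu\<^sup>2 * measure M B"
proof -
  have B_M: "B \<in> sets M" using B sub unfolding subalgebra_def by auto
  note w_sq = bounded_cond_second_moment[OF M sub w var]
  note cross = set_integral_inner_eq_0[OF M sub u w u_sq w_sq(1) mean B]
  have V_B: "set_integrable M B V" and w_B: "set_integrable M B (\<lambda>\<omega>. (norm (w \<omega>))\<^sup>2)"
    using B_M V w_sq(1) by (simp_all add: integrable_imp_set_integrable)
  have "set_integrable M B (\<lambda>\<omega>. c * V \<omega> - 2 * gam * (u \<omega> \<bullet> w \<omega>) + gam\<^sup>2 * (norm (w \<omega>))\<^sup>2)"
    using V_B w_B cross(1) by (intro set_integral_add(1) set_integral_diff(1) set_integrable_mult_right)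
  then have "(LINT \<omega>:B|M. V' \<omega>)
      \<le> (LINT \<omega>:B|M. c * V \<omega> - 2 * gam * (u \<omega> \<bullet> w \<omega>) + gam\<^sup>2 * (norm (w \<omega>))\<^sup>2)"
    by (rule set_integral_mono[OF integrable_imp_set_integrable[OF B_M V']])
       (use step sets.sets_into_space[OF B_M] in auto)
  also have "\<dots> = c * (LINT \<omega>:B|M. V \<omega>) + gam\<^sup>2 * (LINT \<omega>:B|M. (norm (w \<omega>))\<^sup>2)"
    using V_B w_B cross by simp
  also have "\<dots> \<le> c * (LINT \<omega>:B|M. V \<omega>) + gam\<^sup>2 * (nu\<^sup>2 * measure M B)"
    using w_sq(2)[OF B] by (simp add: mult_left_mono)
  finally show ?thesis by (simp add: mult.assoc)
qed

section \<open>Projected stochastic gradient descent\<close>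

text \<open>Measurability of gF along random points of X (gF_measurable) stands in for the regularity
  hypotheses on F; the theorem derives it from borel_measurable_gradient_compose.\<close>
locale projected_sgd = prob_space M for M :: "'a measure" +
  fixes P :: "'s measure" and X :: "'v::euclidean_space set"
    and f :: "'v \<Rightarrow> real" and gf :: "'v \<Rightarrow> 'v" and gF :: "'v \<Rightarrow> 's \<Rightarrow> 'v"
    and L eta nu :: real and xstar :: 'v
    and xi :: "nat \<Rightarrow> 'a \<Rightarrow> 's" and x :: "nat \<Rightarrow> 'a \<Rightarrow> 'v"
  assumes X_closed: "closed X" and X_convex: "convex X" and X_ne: "X \<noteq> {}"
    and f_grad: "\<forall>y\<in>X. (f has_derivative (\<lambda>h. gf y \<bullet> h)) (at y)"
    and L_pos: "L > 0" and f_lip: "L-lipschitz_on X gf"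
    and eta_pos: "eta > 0" and f_sconv: "strongly_convex_on X f eta"
    and xstar_in: "xstar \<in> X" and xstar_min: "\<forall>y\<in>X. f xstar \<le> f y"
    and nu_pos: "nu > 0"
    and xi_meas: "\<forall>k. xi k \<in> measurable M P"
    and gF_measurable: "\<And>(N :: 'a measure) y s. y \<in> borel_measurable N \<Longrightarrow> s \<in> measurable N P \<Longrightarrow>
      (\<forall>\<omega>\<in>space N. y \<omega> \<in> X) \<Longrightarrow> (\<lambda>\<omega>. gF (y \<omega>) (s \<omega>)) \<in> borel_measurable N"
    and x0_meas: "x 0 \<in> borel_measurable M"
    and x0_in: "\<forall>\<omega>\<in>space M. x 0 \<omega> \<in> X"
    and x0_sq: "integrable M (\<lambda>\<omega>. (norm (x 0 \<omega>))\<^sup>2)"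
    and iter: "\<forall>k. \<forall>\<omega>\<in>space M. x (Suc k) \<omega> =
      closest_point X (x k \<omega> - gamma_star eta nu (integral\<^sup>L M (\<lambda>\<omega>'. (norm (x 0 \<omega>' - xstar))\<^sup>2)) k
        *\<^sub>R (gf (x k \<omega>) + (gF (x k \<omega>) (xi k \<omega>) - gf (x k \<omega>))))"
    and noise_mean: "\<forall>k. \<forall>b\<in>Basis. AE \<omega> in M.
      real_cond_exp M (history M (x 0) P xi k) (\<lambda>\<omega>'. (gF (x k \<omega>') (xi k \<omega>') - gf (x k \<omega>')) \<bullet> b) \<omega> = 0"
    and noise_var: "\<forall>k. AE \<omega> in M.
      nn_cond_exp M (history M (x 0) P xi k)
        (\<lambda>\<omega>'. ennreal ((norm (gF (x k \<omega>') (xi k \<omega>') - gf (x k \<omega>')))\<^sup>2)) \<omega> \<le> ennreal (nu\<^sup>2)"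
    and small: "eta / (2 * nu\<^sup>2) * integral\<^sup>L M (\<lambda>\<omega>. (norm (x 0 \<omega> - xstar))\<^sup>2) < 1 / L"
begin

definition initial_error :: real where
  "initial_error = (\<integral>\<omega>. (norm (x 0 \<omega> - xstar))\<^sup>2 \<partial>M)"

definition step_size :: "nat \<Rightarrow> real" where
  "step_size = gamma_star eta nu initial_error"

definition hist :: "nat \<Rightarrow> 'a measure" where
  "hist k = history M (x 0) P xi k"

definition noise :: "nat \<Rightarrow> 'a \<Rightarrow> 'v" where
  "noise k \<omega> = gF (x k \<omega>) (xi k \<omega>) - gf (x k \<omega>)"

definition drift :: "nat \<Rightarrow> 'a \<Rightarrow> 'v" where
  "drift k \<omega> = x k \<omega> - xstar - step_size k *\<^sub>R (gf (x k \<omega>) - gf xstar)"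

definition sq_error :: "nat \<Rightarrow> 'a \<Rightarrow> real" where
  "sq_error k \<omega> = (norm (x k \<omega> - xstar))\<^sup>2"

lemma step_size_Suc: "step_size (Suc k) = step_size k * (1 - eta / 2 * step_size k)"
  by (simp add: step_size_def)

lemma iterate_Suc:
  "\<omega> \<in> space M \<Longrightarrow> x (Suc k) \<omega> = closest_point X (x k \<omega> - step_size k *\<^sub>R (gf (x k \<omega>) + noise k \<omega>))"
  using iter by (simp add: step_size_def initial_error_def noise_def)

lemma iterate_in_X: "\<omega> \<in> space M \<Longrightarrow> x k \<omega> \<in> X"
  by (cases k) (auto simp: iterate_Suc x0_in closest_point_in_set[OF X_closed X_ne])

lemma gradient_strongly_monotone:
  "a \<in> X \<Longrightarrow> b \<in> X \<Longrightarrow> eta * (norm (a - b))\<^sup>2 \<le> (a - b) \<bullet> (gf a - gf b)"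
  by (rule strongly_convex_on_gradient_monotone[OF f_grad f_sconv])

lemma gradient_lipschitz: "a \<in> X \<Longrightarrow> b \<in> X \<Longrightarrow> norm (gf a - gf b) \<le> L * norm (a - b)"
  using lipschitz_onD[OF f_lip] by (simp add: dist_norm)

lemma minimizer_fixed_point: "0 \<le> g \<Longrightarrow> closest_point X (xstar - g *\<^sub>R gf xstar) = xstar"
  using minimizer_gradient_ineq[OF _ X_convex xstar_in _ xstar_min] f_grad xstar_in
  by (intro closest_point_gradient_step_minimizer[OF X_convex X_closed xstar_in]) auto

lemma subalgebra_hist: "subalgebra M (hist k)"
  unfolding hist_def using x0_meas xi_meas by (rule subalgebra_history)

lemma space_hist: "space (hist k) = space M"
  by (simp add: hist_def history_space)

lemma sets_hist_mono: "sets (hist k) \<subseteq> sets (hist (Suc k))"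
  by (simp add: hist_def history_mono)

lemma iterate_adapted: "x k \<in> borel_measurable (hist k)"
proof (induction k)
  case 0
  show ?case unfolding hist_def by (rule measurable_history_initial)
next
  case (Suc k)
  have sub: "subalgebra (hist (Suc k)) (hist k)"
    using sets_hist_mono space_hist unfolding subalgebra_def by auto
  have x_k: "x k \<in> borel_measurable (hist (Suc k))"
    by (rule measurable_from_subalg[OF sub Suc])
  have "xi k \<in> measurable (hist (Suc k)) P"
    unfolding hist_def using xi_meas by (intro measurable_history_sample) auto
  then have "(\<lambda>\<omega>. gF (x k \<omega>) (xi k \<omega>)) \<in> borel_measurable (hist (Suc k))"
    using x_k iterate_in_X by (intro gF_measurable) (auto simp: space_hist)
  then have "(\<lambda>\<omega>. closest_point X (x k \<omega> - step_size k *\<^sub>R gF (x k \<omega>) (xi k \<omega>))) \<in> borel_measurable (hist (Suc k))"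
    by (intro borel_measurable_continuous_on[OF continuous_on_closest_point[OF X_convex X_closed X_ne]])
      (use x_k in measurable)
  then show ?case
    by (rule measurable_cong[THEN iffD1, rotated]) (simp add: iterate_Suc noise_def space_hist)
qed

lemma gradient_adapted: "(\<lambda>\<omega>. gf (x k \<omega>)) \<in> borel_measurable (hist k)"
proof -
  have "continuous_on UNIV (\<lambda>v. gf (closest_point X v))"
    by (rule continuous_on_compose2[OF lipschitz_on_continuous_on[OF f_lip]
          continuous_on_closest_point[OF X_convex X_closed X_ne]])
       (auto simp: closest_point_in_set[OF X_closed X_ne])
  then have "(\<lambda>\<omega>. gf (closest_point X (x k \<omega>))) \<in> borel_measurable (hist k)"
    by (rule borel_measurable_continuous_on[OF _ iterate_adapted])
  then show ?thesis
    by (rule measurable_cong[THEN iffD1, rotated]) (simp add: space_hist iterate_in_X closest_point_self)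
qed

lemma borel_measurable_iterate[measurable]: "x k \<in> borel_measurable M"
  by (rule measurable_from_subalg[OF subalgebra_hist iterate_adapted])

lemma borel_measurable_noise[measurable]: "noise k \<in> borel_measurable M"
proof -
  have [measurable]: "(\<lambda>\<omega>. gF (x k \<omega>) (xi k \<omega>)) \<in> borel_measurable M"
    using xi_meas iterate_in_X by (intro gF_measurable) auto
  have [measurable]: "(\<lambda>\<omega>. gf (x k \<omega>)) \<in> borel_measurable M"
    by (rule measurable_from_subalg[OF subalgebra_hist gradient_adapted])
  show ?thesis unfolding noise_def[abs_def] by measurable
qed

lemma drift_adapted: "drift k \<in> borel_measurable (hist k)"
proof -
  have [measurable]: "x k \<in> borel_measurable (hist k)" "(\<lambda>\<omega>. gf (x k \<omega>)) \<in> borel_measurable (hist k)"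
    by (rule iterate_adapted, rule gradient_adapted)
  show ?thesis unfolding drift_def[abs_def] by measurable
qed

lemma sq_error_adapted: "sq_error k \<in> borel_measurable (hist k)"
proof -
  have [measurable]: "x k \<in> borel_measurable (hist k)" by (rule iterate_adapted)
  show ?thesis unfolding sq_error_def[abs_def] by measurable
qed

lemma borel_measurable_drift[measurable]: "drift k \<in> borel_measurable M"
  by (rule measurable_from_subalg[OF subalgebra_hist drift_adapted])

lemma borel_measurable_sq_error[measurable]: "sq_error k \<in> borel_measurable M"
  by (rule measurable_from_subalg[OF subalgebra_hist sq_error_adapted])

lemma noise_cond_mean: "\<forall>b\<in>Basis. AE \<omega> in M. real_cond_exp M (hist k) (\<lambda>\<omega>. noise k \<omega> \<bullet> b) \<omega> = 0"
  using noise_mean by (simp add: hist_def noise_def)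

lemma noise_cond_var: "AE \<omega> in M. nn_cond_exp M (hist k) (\<lambda>\<omega>. ennreal ((norm (noise k \<omega>))\<^sup>2)) \<omega> \<le> ennreal (nu\<^sup>2)"
  using noise_var by (simp add: hist_def noise_def)

lemma noise_sq_integrable: "integrable M (\<lambda>\<omega>. (norm (noise k \<omega>))\<^sup>2)"
  by (rule bounded_cond_second_moment(1)[OF prob_space_axioms subalgebra_hist borel_measurable_noise
        noise_cond_var])

lemma drift_sq_le:
  "\<omega> \<in> space M \<Longrightarrow> 0 \<le> step_size k \<Longrightarrow>
    (norm (drift k \<omega>))\<^sup>2 \<le> (1 - 2 * step_size k * eta + (step_size k)\<^sup>2 * L\<^sup>2) * sq_error k \<omega>"
  unfolding drift_def sq_error_def using iterate_in_X xstar_in L_pos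
  by (intro gradient_step_contraction gradient_strongly_monotone gradient_lipschitz) auto

lemma sq_error_Suc_le_drift:
  "\<omega> \<in> space M \<Longrightarrow> 0 \<le> step_size k \<Longrightarrow>
    sq_error (Suc k) \<omega> \<le> (norm (drift k \<omega> - step_size k *\<^sub>R noise k \<omega>))\<^sup>2"
  unfolding sq_error_def drift_def iterate_Suc
  by (intro power_mono projected_gradient_step_dist_le[OF X_convex X_closed X_ne minimizer_fixed_point]) auto

end

text \<open>\<eta> <= L holds unless X = {xstar} (strongly_monotone_le_lipschitz); it gives \<eta>/2 \<gamma> 0 < 1
  and hence nonnegative step sizes.\<close>
locale projected_sgd_eta_le_L = projected_sgd +
  assumes eta_le_L: "eta \<le> L"
begin

lemma step_size_0_nonneg: "0 \<le> step_size 0"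
proof -
  have "0 \<le> initial_error" unfolding initial_error_def by (intro Bochner_Integration.integral_nonneg) simp
  then show ?thesis using eta_pos by (simp add: step_size_def)
qed

lemma eta_step_size_0_lt_1: "eta / 2 * step_size 0 < 1"
proof -
  have "eta / 2 * step_size 0 \<le> L / 2 * step_size 0"
    using eta_le_L step_size_0_nonneg by (intro mult_right_mono) auto
  also have "\<dots> < L / 2 * (1 / L)"
    using small L_pos by (intro mult_strict_left_mono) (simp_all add: step_size_def initial_error_def)
  finally show ?thesis using L_pos by simp
qed

lemma step_size_nonneg: "0 \<le> step_size k"
  using logistic_decay_bounds(1)[where g=step_size, OF step_size_Suc _ step_size_0_nonneg]
    eta_pos eta_step_size_0_lt_1 by simp

lemma step_size_tendsto_0: "step_size \<longlonglongrightarrow> 0"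
  using logistic_decay_tendsto_0[where g=step_size, OF step_size_Suc _ step_size_0_nonneg]
    eta_pos eta_step_size_0_lt_1 by simp

lemma contraction_factor_nonneg: "0 \<le> 1 - 2 * step_size k * eta + (step_size k)\<^sup>2 * L\<^sup>2"
proof -
  have "2 * step_size k * eta \<le> 2 * step_size k * L"
    using eta_le_L step_size_nonneg[of k] by (intro mult_left_mono) auto
  moreover have "0 \<le> (1 - step_size k * L)\<^sup>2" by simp
  ultimately show ?thesis by (simp add: power2_diff power_mult_distrib algebra_simps)
qed

lemma sq_error_Suc_le:
  assumes "\<omega> \<in> space M"
  shows "sq_error (Suc k) \<omega> \<le> (1 - 2 * step_size k * eta + (step_size k)\<^sup>2 * L\<^sup>2) * sq_error k \<omega>
    - 2 * step_size k * (drift k \<omega> \<bullet> noise k \<omega>) + (step_size k)\<^sup>2 * (norm (noise k \<omega>))\<^sup>2"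
  using sq_error_Suc_le_drift[OF assms step_size_nonneg[of k]] drift_sq_le[OF assms step_size_nonneg[of k]]
    power2_norm_diff_scaleR[of "drift k \<omega>" "step_size k" "noise k \<omega>"]
  by linarith

lemma sq_error_integrable: "integrable M (sq_error k)"
proof (induction k)
  case 0
  have "integrable M (\<lambda>\<omega>. 2 * (norm (x 0 \<omega>))\<^sup>2 + 2 * (norm xstar)\<^sup>2)" using x0_sq by simp
  then show ?case
    by (rule Bochner_Integration.integrable_bound)
       (use power2_norm_diff_le in \<open>auto simp: sq_error_def\<close>)
next
  case (Suc k)
  let ?c = "1 + (step_size k)\<^sup>2 * L\<^sup>2"
  let ?R = "\<lambda>\<omega>. 2 * (?c * sq_error k \<omega>) + 2 * ((step_size k)\<^sup>2 * (norm (noise k \<omega>))\<^sup>2)"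
  have "integrable M ?R"
    using Suc noise_sq_integrable by simp
  then show ?case
  proof (rule Bochner_Integration.integrable_bound)
    show "AE \<omega> in M. norm (sq_error (Suc k) \<omega>) \<le> norm (?R \<omega>)"
    proof (rule AE_I2)
      fix \<omega> assume \<omega>: "\<omega> \<in> space M"
      have "(norm (drift k \<omega>))\<^sup>2 \<le> ?c * sq_error k \<omega>"
        using drift_sq_le[OF \<omega> step_size_nonneg[of k]] step_size_nonneg[of k] eta_pos
          mult_right_mono[of "1 - 2 * step_size k * eta + (step_size k)\<^sup>2 * L\<^sup>2" ?c "sq_error k \<omega>"]
        by (simp add: sq_error_def)
      moreover have "(norm (drift k \<omega> - step_size k *\<^sub>R noise k \<omega>))\<^sup>2
          \<le> 2 * (norm (drift k \<omega>))\<^sup>2 + 2 * ((step_size k)\<^sup>2 * (norm (noise k \<omega>))\<^sup>2)"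
        using power2_norm_diff_le[of "drift k \<omega>" "step_size k *\<^sub>R noise k \<omega>"]
        by (simp add: power_mult_distrib)
      ultimately have "sq_error (Suc k) \<omega> \<le> ?R \<omega>"
        using sq_error_Suc_le_drift[OF \<omega> step_size_nonneg[of k]] by linarith
      moreover have "0 \<le> sq_error (Suc k) \<omega>" by (simp add: sq_error_def)
      ultimately show "norm (sq_error (Suc k) \<omega>) \<le> norm (?R \<omega>)"
        unfolding real_norm_def using abs_ge_self[of "?R \<omega>"] by (intro abs_leI) linarith+
    qed
  qed (rule borel_measurable_sq_error)
qed

lemma drift_sq_integrable: "integrable M (\<lambda>\<omega>. (norm (drift k \<omega>))\<^sup>2)"
proof (rule Bochner_Integration.integrable_bound)
  show "integrable M (\<lambda>\<omega>. (1 + (step_size k)\<^sup>2 * L\<^sup>2) * sq_error k \<omega>)"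
    using sq_error_integrable by simp
  show "AE \<omega> in M. norm ((norm (drift k \<omega>))\<^sup>2) \<le> norm ((1 + (step_size k)\<^sup>2 * L\<^sup>2) * sq_error k \<omega>)"
  proof (rule AE_I2)
    fix \<omega> assume \<omega>: "\<omega> \<in> space M"
    have "0 \<le> sq_error k \<omega>" by (simp add: sq_error_def)
    then have "(norm (drift k \<omega>))\<^sup>2 \<le> (1 + (step_size k)\<^sup>2 * L\<^sup>2) * sq_error k \<omega>"
      using drift_sq_le[OF \<omega> step_size_nonneg[of k]] step_size_nonneg[of k] eta_pos
        mult_right_mono[of "1 - 2 * step_size k * eta + (step_size k)\<^sup>2 * L\<^sup>2" "1 + (step_size k)\<^sup>2 * L\<^sup>2"]
      by force
    then show "norm ((norm (drift k \<omega>))\<^sup>2) \<le> norm ((1 + (step_size k)\<^sup>2 * L\<^sup>2) * sq_error k \<omega>)"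
      by simp
  qed
qed measurable

lemma sq_error_set_integral_Suc_le:
  "B \<in> sets (hist k) \<Longrightarrow>
    (LINT \<omega>:B|M. sq_error (Suc k) \<omega>)
      \<le> (1 - 2 * step_size k * eta + (step_size k)\<^sup>2 * L\<^sup>2) * (LINT \<omega>:B|M. sq_error k \<omega>)
        + (step_size k)\<^sup>2 * nu\<^sup>2 * measure M B"
  by (rule conditional_descent[OF prob_space_axioms subalgebra_hist drift_adapted borel_measurable_noise
        drift_sq_integrable noise_cond_mean noise_cond_var sq_error_integrable sq_error_integrable
        sq_error_Suc_le])

lemma expected_sq_error_tendsto_0: "(\<lambda>k. \<integral>\<omega>. sq_error k \<omega> \<partial>M) \<longlonglongrightarrow> 0"
proof -
  define e where "e k = (\<integral>\<omega>. sq_error k \<omega> \<partial>M)" for k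
  have space: "space M \<in> sets (hist k)" for k using sets.top[of "hist k"] by (simp add: space_hist)
  have rec: "e (Suc k) \<le> (1 - 2 * step_size k * eta + (step_size k)\<^sup>2 * L\<^sup>2) * e k + (step_size k)\<^sup>2 * nu\<^sup>2" for k
    using sq_error_set_integral_Suc_le[OF space]
    by (simp add: e_def set_integral_space[OF sq_error_integrable] prob_space)
  have e_nonneg: "0 \<le> e k" for k
    unfolding e_def sq_error_def by (intro Bochner_Integration.integral_nonneg) simp
  show ?thesis
  proof (cases "step_size 0 = 0")
    case True
    have "step_size k = 0" for k by (induction k) (simp_all add: True step_size_Suc)
    moreover have "e 0 = 0"
      using True eta_pos nu_pos by (simp add: e_def sq_error_def step_size_def initial_error_def)
    ultimately have "e k = 0" for k
    proof (induction k)
      case (Suc k)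
      then show ?case using rec[of k] e_nonneg[of "Suc k"] by simp
    qed
    then show ?thesis by (simp add: e_def[symmetric])
  next
    case False
    then have "0 < step_size 0" using step_size_0_nonneg by simp
    then show ?thesis
      using error_recursion_tendsto_0[OF step_size_Suc eta_pos _ eta_step_size_0_lt_1 e_nonneg rec]
      by (simp add: e_def)
  qed
qed

definition lyapunov :: "nat \<Rightarrow> 'a \<Rightarrow> real" where
  "lyapunov k \<omega> = sq_error k \<omega> + 2 * nu\<^sup>2 / eta * step_size k"

lemma lyapunov_nonneg: "0 \<le> lyapunov k \<omega>"
  using eta_pos step_size_nonneg[of k] by (simp add: lyapunov_def sq_error_def)

lemma lyapunov_integrable: "integrable M (lyapunov k)"
  using sq_error_integrable[of k] unfolding lyapunov_def[abs_def] by simp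

lemma lyapunov_adapted: "lyapunov k \<in> borel_measurable (hist k)"
  using sq_error_adapted[of k] unfolding lyapunov_def[abs_def] by measurable

lemma set_integral_lyapunov:
  "B \<in> sets M \<Longrightarrow>
    (LINT \<omega>:B|M. lyapunov k \<omega>) = (LINT \<omega>:B|M. sq_error k \<omega>) + 2 * nu\<^sup>2 / eta * step_size k * measure M B"
  using sq_error_integrable
  by (simp add: lyapunov_def set_integral_add(2) set_integral_const integrable_imp_set_integrable)

lemma lyapunov_set_integral_Suc_le:
  assumes small_step: "step_size k * L\<^sup>2 \<le> 2 * eta" and B: "B \<in> sets (hist k)"
  shows "(LINT \<omega>:B|M. lyapunov (Suc k) \<omega>) \<le> (LINT \<omega>:B|M. lyapunov k \<omega>)"
proof -
  have B_M: "B \<in> sets M" using B subalgebra_hist unfolding subalgebra_def by blast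
  have "(1 - 2 * step_size k * eta + (step_size k)\<^sup>2 * L\<^sup>2) * (LINT \<omega>:B|M. sq_error k \<omega>)
      \<le> (LINT \<omega>:B|M. sq_error k \<omega>)"
  proof (rule mult_left_le_one_le)
    show "0 \<le> (LINT \<omega>:B|M. sq_error k \<omega>)"
      unfolding set_lebesgue_integral_def sq_error_def by (intro Bochner_Integration.integral_nonneg) simp
    have "step_size k * (step_size k * L\<^sup>2) \<le> step_size k * (2 * eta)"
      using small_step step_size_nonneg[of k] by (intro mult_left_mono)
    then show "1 - 2 * step_size k * eta + (step_size k)\<^sup>2 * L\<^sup>2 \<le> 1"
      by (simp add: power2_eq_square algebra_simps)
  qed (rule contraction_factor_nonneg)
  moreover have "(step_size k)\<^sup>2 * nu\<^sup>2 + 2 * nu\<^sup>2 / eta * step_size (Suc k) = 2 * nu\<^sup>2 / eta * step_size k"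
    using eta_pos by (simp add: step_size_Suc field_simps power2_eq_square)
  then have "(step_size k)\<^sup>2 * nu\<^sup>2 * measure M B + 2 * nu\<^sup>2 / eta * step_size (Suc k) * measure M B
      = 2 * nu\<^sup>2 / eta * step_size k * measure M B"
    by (metis distrib_right)
  ultimately show ?thesis
    using sq_error_set_integral_Suc_le[OF B] unfolding set_integral_lyapunov[OF B_M] by linarith
qed

lemma sq_error_AE_tendsto_0: "AE \<omega> in M. (\<lambda>k. sq_error k \<omega>) \<longlonglongrightarrow> 0"
proof -
  have "eventually (\<lambda>k. step_size k * L\<^sup>2 < 2 * eta) sequentially"
    using order_tendstoD(2)[OF tendsto_mult_left_zero[OF step_size_tendsto_0, of "L\<^sup>2"]] eta_pos
    by simp
  then obtain K where K: "\<And>k. K \<le> k \<Longrightarrow> step_size k * L\<^sup>2 \<le> 2 * eta"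
    unfolding eventually_sequentially by (meson less_imp_le)
  interpret lyapunov: nonneg_supermartingale M hist lyapunov K
  proof
    show "subalgebra M (hist k)" "sets (hist k) \<subseteq> sets (hist (Suc k))" for k
      by (rule subalgebra_hist, rule sets_hist_mono)
    show "lyapunov k \<in> borel_measurable (hist k)" "0 \<le> lyapunov k \<omega>" "integrable M (lyapunov k)" for k \<omega>
      by (rule lyapunov_adapted, rule lyapunov_nonneg, rule lyapunov_integrable)
    show "(LINT \<omega>:B|M. lyapunov (Suc k) \<omega>) \<le> (LINT \<omega>:B|M. lyapunov k \<omega>)"
      if "K \<le> k" "B \<in> sets (hist k)" for k B
      by (rule lyapunov_set_integral_Suc_le[OF K[OF that(1)] that(2)])
  qed
  have "(\<lambda>k. (\<integral>\<omega>. sq_error k \<omega> \<partial>M) + 2 * nu\<^sup>2 / eta * step_size k) \<longlonglongrightarrow> 0 + 2 * nu\<^sup>2 / eta * 0"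
    by (intro tendsto_intros expected_sq_error_tendsto_0 step_size_tendsto_0)
  then have "(\<lambda>k. \<integral>\<omega>. lyapunov k \<omega> \<partial>M) \<longlonglongrightarrow> 0"
    using sq_error_integrable by (simp add: lyapunov_def prob_space)
  then have "AE \<omega> in M. (\<lambda>k. lyapunov k \<omega>) \<longlonglongrightarrow> 0"
    by (rule lyapunov.AE_tendsto_0)
  then show ?thesis
  proof (rule AE_mp, intro AE_I2 impI)
    fix \<omega> assume lim: "(\<lambda>k. lyapunov k \<omega>) \<longlonglongrightarrow> 0"
    have "\<forall>\<^sub>F k in sequentially. 0 \<le> sq_error k \<omega>" by (simp add: sq_error_def)
    moreover have "\<forall>\<^sub>F k in sequentially. sq_error k \<omega> \<le> lyapunov k \<omega>"
      using eta_pos step_size_nonneg by (simp add: lyapunov_def)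
    ultimately show "(\<lambda>k. sq_error k \<omega>) \<longlonglongrightarrow> 0"
      by (rule tendsto_sandwich[OF _ _ tendsto_const lim])
  qed
qed

lemma iterates_AE_tendsto: "AE \<omega> in M. (\<lambda>k. x k \<omega>) \<longlonglongrightarrow> xstar"
  using sq_error_AE_tendsto_0
proof (rule AE_mp, intro AE_I2 impI)
  fix \<omega> assume "(\<lambda>k. sq_error k \<omega>) \<longlonglongrightarrow> 0"
  then have "(\<lambda>k. sqrt (sq_error k \<omega>)) \<longlonglongrightarrow> sqrt 0" by (rule tendsto_real_sqrt)
  then have "(\<lambda>k. norm (x k \<omega> - xstar)) \<longlonglongrightarrow> 0" by (simp add: sq_error_def)
  then show "(\<lambda>k. x k \<omega>) \<longlonglongrightarrow> xstar" by (simp add: tendsto_norm_zero_iff LIM_zero_cancel)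
qed

end

context projected_sgd
begin

lemma AE_iterates_tendsto: "AE \<omega> in M. (\<lambda>k. x k \<omega>) \<longlonglongrightarrow> xstar"
proof (cases "\<exists>y\<in>X. y \<noteq> xstar")
  case True
  then obtain y where y: "y \<in> X" "y \<noteq> xstar" by blast
  interpret projected_sgd_eta_le_L M P X f gf gF L eta nu xstar xi x
    by unfold_locales (rule strongly_monotone_le_lipschitz[OF gradient_strongly_monotone[OF y(1) xstar_in]
          gradient_lipschitz[OF y(1) xstar_in] y(2)])
  show ?thesis by (rule iterates_AE_tendsto)
next
  case False
  then have "x k \<omega> = xstar" if "\<omega> \<in> space M" for k \<omega> using iterate_in_X[OF that] by blast
  then show ?thesis by (intro AE_I2) simp
qed

end

theorem corollary1:
  fixes M :: "'a measure"                        \<comment> \<open>underlying probability space\<close>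
    and P :: "'s measure"                        \<comment> \<open>distribution of xi on the sample space Omega\<close>
    and F :: "'v::euclidean_space \<Rightarrow> 's \<Rightarrow> real"
    and gF :: "'v \<Rightarrow> 's \<Rightarrow> 'v"                 \<comment> \<open>gradient of F(.,s)\<close>
    and gf :: "'v \<Rightarrow> 'v"                        \<comment> \<open>gradient of f\<close>
    and D X :: "'v set"
    and L eta nu :: real
    and xstar :: 'v
    and xi :: "nat \<Rightarrow> 'a \<Rightarrow> 's"
    and x :: "nat \<Rightarrow> 'a \<Rightarrow> 'v"
  assumes M: "prob_space M"
    and P: "prob_space P"
    and D_open: "open D"
    and X_sub: "X \<subseteq> D" and X_ne: "X \<noteq> {}" and X_closed: "closed X" and X_convex: "convex X"
    and F_convex: "\<forall>s\<in>space P. convex_on D (\<lambda>y. F y s)"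
    and F_grad: "\<forall>s\<in>space P. \<forall>y\<in>D. ((\<lambda>z. F z s) has_derivative (\<lambda>h. gF y s \<bullet> h)) (at y)"
    and F_int: "\<forall>y\<in>D. integrable P (F y)"
    and f_grad: "\<forall>y\<in>X. ((\<lambda>z. integral\<^sup>L P (F z)) has_derivative (\<lambda>h. gf y \<bullet> h)) (at y)"
    and L_pos: "L > 0"
    and f_lip: "L-lipschitz_on X gf"
    and eta_pos: "eta > 0"
    and f_sconv: "strongly_convex_on X (\<lambda>z. integral\<^sup>L P (F z)) eta"
    and xstar_in: "xstar \<in> X"
    and xstar_min: "\<forall>y\<in>X. integral\<^sup>L P (F xstar) \<le> integral\<^sup>L P (F y)"
    and nu_pos: "nu > 0"
    and xi_meas: "\<forall>k. xi k \<in> measurable M P"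
    and xi_distr: "\<forall>k. distr M P (xi k) = P"
    and x0_meas: "x 0 \<in> borel_measurable M"
    and x0_in: "\<forall>\<omega>\<in>space M. x 0 \<omega> \<in> X"
    and x0_sq: "integrable M (\<lambda>\<omega>. (norm (x 0 \<omega>))\<^sup>2)"
    and w_meas: "\<forall>k. (\<lambda>\<omega>. gF (x k \<omega>) (xi k \<omega>)) \<in> borel_measurable M"
    and iter: "\<forall>k. \<forall>\<omega>\<in>space M. x (Suc k) \<omega> =
        closest_point X (x k \<omega> - gamma_star eta nu (integral\<^sup>L M (\<lambda>\<omega>'. (norm (x 0 \<omega>' - xstar))\<^sup>2)) k
            *\<^sub>R (gf (x k \<omega>) + (gF (x k \<omega>) (xi k \<omega>) - gf (x k \<omega>))))"
    and w_mean: "\<forall>k. \<forall>b\<in>Basis. AE \<omega> in M.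
        real_cond_exp M (history M (x 0) P xi k)
          (\<lambda>\<omega>'. (gF (x k \<omega>') (xi k \<omega>') - gf (x k \<omega>')) \<bullet> b) \<omega> = 0"
    and w_var: "\<forall>k. AE \<omega> in M.
        nn_cond_exp M (history M (x 0) P xi k)
          (\<lambda>\<omega>'. ennreal ((norm (gF (x k \<omega>') (xi k \<omega>') - gf (x k \<omega>')))\<^sup>2)) \<omega> \<le> ennreal (nu\<^sup>2)"
    and small: "eta / (2 * nu\<^sup>2) * integral\<^sup>L M (\<lambda>\<omega>. (norm (x 0 \<omega> - xstar))\<^sup>2) < 1 / L"
  shows "AE \<omega> in M. (\<lambda>k. x k \<omega>) \<longlonglongrightarrow> xstar"
proof -
  have F_cont: "\<forall>s\<in>space P. continuous_on D (\<lambda>y. F y s)"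
    using convex_on_continuous[OF D_open] F_convex by blast
  have F_meas: "\<forall>y\<in>D. F y \<in> borel_measurable P"
    using F_int by blast
  have gF_meas: "(\<lambda>\<omega>. gF (y \<omega>) (s \<omega>)) \<in> borel_measurable N"
    if "y \<in> borel_measurable N" "s \<in> measurable N P" "\<forall>\<omega>\<in>space N. y \<omega> \<in> X" for N :: "'a measure" and y s
    using that X_sub by (intro borel_measurable_gradient_compose[OF D_open F_cont F_meas F_grad]) auto
  interpret projected_sgd M P X "\<lambda>z. integral\<^sup>L P (F z)" gf gF L eta nu xstar xi x
    by (intro projected_sgd.intro projected_sgd_axioms.intro M) (fact assms gF_meas)+
  show ?thesis by (rule AE_iterates_tendsto)
qed

end
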